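(* Let $e, e_1, e_2$ be terms of $\mathrm{F}_H$ and $x$ a variable, and suppose $e_1 \longrightarrow e_2$. (1) If $e[e_1/x] \longrightarrow^* v_1$ for a value $v_1$, then $e[e_2/x] \longrightarrow^* v_2$ for some value $v_2$; moreover, if $v_1 = \mathsf{true}$ then $v_2 = \mathsf{true}$. (2) If $e[e_2/x] \longrightarrow^* v_2$ for a value $v_2$, then $e[e_1/x] \longrightarrow^* v_1$ for some value $v_1$; moreover, if $v_2 = \mathsf{true}$ then $v_1 = \mathsf{true}$.
   Context: Syntax of the calculus $\mathrm{F}_H$. Fix a set of base types $B$ containing $\mathsf{Bool}$; each base type $B$ has a set $\mathcal{K}_B$ of constants (with $\mathcal{K}_{\mathsf{Bool}}=\{\mathsf{true},\mathsf{false}\}$); $k$ ranges over constants. Fix primitive operations $\mathtt{op}$, each with a denotation $[\![\mathtt{op}]\!]$, a partial function from tuples of constants to constants. Types: $T ::= B \mid \alpha \mid x{:}T_1\to T_2 \mid \forall\alpha.T \mid \{x{:}T \mid e\}$. Values: $v ::= k \mid \lambda x{:}T.e \mid \Lambda\alpha.e \mid \langle T_1\Rightarrow T_2\rangle^{\ell}$ ($\ell$ ranges over blame labels). Terms: $e ::= v \mid x \mid \mathtt{op}(e_1,\dots,e_n) \mid e_1\,e_2 \mid e\,T \mid \langle\!\langle \{x{:}T_1\mid e_1\}, e_2\rangle\!\rangle^{\ell} \mid \langle \{x{:}T_1\mid e_1\}, e_2, v\rangle^{\ell} \mid \Uparrow\ell$. Variables are not values. Substitution $e[e'/x]$ is capture-avoiding;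 $\mathsf{let}\ y{:}T = e_1\ \mathsf{in}\ e_2$ abbreviates $(\lambda y{:}T.e_2)\,e_1$. Reduction $\rightsquigarrow$: $\mathtt{op}(k_1,\dots,k_n)\rightsquigarrow[\![\mathtt{op}]\!](k_1,\dots,k_n)$; $(\lambda x{:}T.e)\,v\rightsquigarrow e[v/x]$; $(\Lambda\alpha.e)\,T\rightsquigarrow e[T/\alpha]$; $\langle B\Rightarrow B\rangle^\ell v\rightsquigarrow v$; $\langle x{:}T_{11}\to T_{12}\Rightarrow x{:}T_{21}\to T_{22}\rangle^\ell v\rightsquigarrow \lambda x{:}T_{21}.\,\mathsf{let}\ y{:}T_{11}=\langle T_{21}\Rightarrow T_{11}\rangle^\ell x\ \mathsf{in}\ \langle T_{12}[y/x]\Rightarrow T_{22}\rangle^\ell (v\,y)$ with $y$ fresh; $\langle\forall\alpha.T_1\Rightarrow\forall\alpha.T_2\rangle^\ell v\rightsquigarrow\Lambda\alpha.\langle T_1\Rightarrow T_2\rangle^\ell(v\,\alpha)$; $\langle\{x{:}T_1\mid e_1\}\Rightarrow T_2\rangle^\ell v\rightsquigarrow\langle T_1\Rightarrow T_2\rangle^\ell v$; $\langle T_1\Rightarrow\{x{:}T_2\mid e_2\}\rangle^\ell v\rightsquigarrow\langle\!\langle\{x{:}T_2\mid e_2\},\langle T_1\Rightarrow T_2\rangle^\ell v\rangle\!\rangle^\ell$ provided $T_1$ is not a refinement type; $\langle\!\langle\{x{:}T\mid e\},v\rangle\!\rangle^\ell\rightsquigarrow\langle\{x{:}T\mid e\},e[v/x],v\rangle^\ell$;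 $\langle\{x{:}T\mid e\},\mathsf{true},v\rangle^\ell\rightsquigarrow v$; $\langle\{x{:}T\mid e\},\mathsf{false},v\rangle^\ell\rightsquigarrow\Uparrow\ell$. Evaluation contexts: $E ::= [\,] \mid \mathtt{op}(v_1,\dots,v_n,E,e_1,\dots,e_m) \mid E\,e \mid v\,E \mid E\,T \mid \langle\!\langle\{x{:}T\mid e\},E\rangle\!\rangle^\ell \mid \langle\{x{:}T\mid e\},E,v\rangle^\ell$. Evaluation $\longrightarrow$: $E[e_1]\longrightarrow E[e_2]$ whenever $e_1\rightsquigarrow e_2$; $E[\Uparrow\ell]\longrightarrow\Uparrow\ell$ whenever $E\neq[\,]$. $\longrightarrow^*$ is the reflexive–transitive closure of $\longrightarrow$. *)

theory Defs
  imports Main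
begin

text \<open>Syntax of F_H in locally nameless representation.
  Bound term variables and bound type variables are de Bruijn indices
  (two separate index spaces); free term and type variables are names (nat).\<close>

datatype 'b base = BBool | BOther 'b
datatype 'k const = CBool bool | CK 'k

datatype ('b,'k,'p,'l) ty =
    TBase "'b base"
  | TBVar nat
  | TFVar nat
  | TFun "('b,'k,'p,'l) ty" "('b,'k,'p,'l) ty"     \<comment> \<open>x:T1 -> T2, T2 binds term index 0\<close>
  | TAll "('b,'k,'p,'l) ty"
  | TRef "('b,'k,'p,'l) ty" "('b,'k,'p,'l) tm"       \<comment> \<open>{x:T | e}, e binds term index 0\<close>
and ('b,'k,'p,'l) tm =
    Const "'k const"
  | BVar nat
  | FVar nat
  | Lam "('b,'k,'p,'l) ty" "('b,'k,'p,'l) tm"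
  | TLam "('b,'k,'p,'l) tm"
  | Cast 'l "('b,'k,'p,'l) ty" "('b,'k,'p,'l) ty"
  | Op 'p "('b,'k,'p,'l) tm list"
  | App "('b,'k,'p,'l) tm" "('b,'k,'p,'l) tm"
  | TApp "('b,'k,'p,'l) tm" "('b,'k,'p,'l) ty"
  | Check 'l "('b,'k,'p,'l) ty" "('b,'k,'p,'l) tm" "('b,'k,'p,'l) tm"
      \<comment> \<open>Check l T e1 e2 = \<langle>\<langle>{x:T|e1}, e2\<rangle>\<rangle>^l ; e1 binds term index 0\<close>
  | Active 'l "('b,'k,'p,'l) ty" "('b,'k,'p,'l) tm" "('b,'k,'p,'l) tm" "('b,'k,'p,'l) tm"
      \<comment> \<open>Active l T e1 e2 v = \<langle>{x:T|e1}, e2, v\<rangle>^l ; e1 binds term index 0\<close>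
  | Blame 'l

fun is_val :: "('b,'k,'p,'l) tm \<Rightarrow> bool" where
  "is_val (Const k) = True"
| "is_val (Lam T e) = True"
| "is_val (TLam e) = True"
| "is_val (Cast l T1 T2) = True"
| "is_val _ = False"

fun is_ref :: "('b,'k,'p,'l) ty \<Rightarrow> bool" where
  "is_ref (TRef T e) = True"
| "is_ref _ = False"

primrec open_ty :: "nat \<Rightarrow> ('b,'k,'p,'l) tm \<Rightarrow> ('b,'k,'p,'l) ty \<Rightarrow> ('b,'k,'p,'l) ty"
and open_tm :: "nat \<Rightarrow> ('b,'k,'p,'l) tm \<Rightarrow> ('b,'k,'p,'l) tm \<Rightarrow> ('b,'k,'p,'l) tm" where
  "open_ty k u (TBase b) = TBase b"
| "open_ty k u (TBVar n) = TBVar n"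
| "open_ty k u (TFVar a) = TFVar a"
| "open_ty k u (TFun T1 T2) = TFun (open_ty k u T1) (open_ty (Suc k) u T2)"
| "open_ty k u (TAll T) = TAll (open_ty k u T)"
| "open_ty k u (TRef T e) = TRef (open_ty k u T) (open_tm (Suc k) u e)"
| "open_tm k u (Const c) = Const c"
| "open_tm k u (BVar n) = (if n = k then u else BVar n)"
| "open_tm k u (FVar y) = FVar y"
| "open_tm k u (Lam T e) = Lam (open_ty k u T) (open_tm (Suc k) u e)"
| "open_tm k u (TLam e) = TLam (open_tm k u e)"
| "open_tm k u (Cast l T1 T2) = Cast l (open_ty k u T1) (open_ty k u T2)"
| "open_tm k u (Op p es) = Op p (map (open_tm k u) es)"
| "open_tm k u (App e1 e2) = App (open_tm k u e1) (open_tm k u e2)"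
| "open_tm k u (TApp e T) = TApp (open_tm k u e) (open_ty k u T)"
| "open_tm k u (Check l T e1 e2) = Check l (open_ty k u T) (open_tm (Suc k) u e1) (open_tm k u e2)"
| "open_tm k u (Active l T e1 e2 v) =
     Active l (open_ty k u T) (open_tm (Suc k) u e1) (open_tm k u e2) (open_tm k u v)"
| "open_tm k u (Blame l) = Blame l"

primrec openT_ty :: "nat \<Rightarrow> ('b,'k,'p,'l) ty \<Rightarrow> ('b,'k,'p,'l) ty \<Rightarrow> ('b,'k,'p,'l) ty"
and openT_tm :: "nat \<Rightarrow> ('b,'k,'p,'l) ty \<Rightarrow> ('b,'k,'p,'l) tm \<Rightarrow> ('b,'k,'p,'l) tm" where
  "openT_ty k U (TBase b) = TBase b"
| "openT_ty k U (TBVar n) = (if n = k then U else TBVar n)"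
| "openT_ty k U (TFVar a) = TFVar a"
| "openT_ty k U (TFun T1 T2) = TFun (openT_ty k U T1) (openT_ty k U T2)"
| "openT_ty k U (TAll T) = TAll (openT_ty (Suc k) U T)"
| "openT_ty k U (TRef T e) = TRef (openT_ty k U T) (openT_tm k U e)"
| "openT_tm k U (Const c) = Const c"
| "openT_tm k U (BVar n) = BVar n"
| "openT_tm k U (FVar y) = FVar y"
| "openT_tm k U (Lam T e) = Lam (openT_ty k U T) (openT_tm k U e)"
| "openT_tm k U (TLam e) = TLam (openT_tm (Suc k) U e)"
| "openT_tm k U (Cast l T1 T2) = Cast l (openT_ty k U T1) (openT_ty k U T2)"
| "openT_tm k U (Op p es) = Op p (map (openT_tm k U) es)"
| "openT_tm k U (App e1 e2) = App (openT_tm k U e1) (openT_tm k U e2)"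
| "openT_tm k U (TApp e T) = TApp (openT_tm k U e) (openT_ty k U T)"
| "openT_tm k U (Check l T e1 e2) = Check l (openT_ty k U T) (openT_tm k U e1) (openT_tm k U e2)"
| "openT_tm k U (Active l T e1 e2 v) =
     Active l (openT_ty k U T) (openT_tm k U e1) (openT_tm k U e2) (openT_tm k U v)"
| "openT_tm k U (Blame l) = Blame l"

primrec close_ty :: "nat \<Rightarrow> nat \<Rightarrow> ('b,'k,'p,'l) ty \<Rightarrow> ('b,'k,'p,'l) ty"
and close_tm :: "nat \<Rightarrow> nat \<Rightarrow> ('b,'k,'p,'l) tm \<Rightarrow> ('b,'k,'p,'l) tm" where
  "close_ty k x (TBase b) = TBase b"
| "close_ty k x (TBVar n) = TBVar n"
| "close_ty k x (TFVar a) = TFVar a"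
| "close_ty k x (TFun T1 T2) = TFun (close_ty k x T1) (close_ty (Suc k) x T2)"
| "close_ty k x (TAll T) = TAll (close_ty k x T)"
| "close_ty k x (TRef T e) = TRef (close_ty k x T) (close_tm (Suc k) x e)"
| "close_tm k x (Const c) = Const c"
| "close_tm k x (BVar n) = BVar n"
| "close_tm k x (FVar y) = (if y = x then BVar k else FVar y)"
| "close_tm k x (Lam T e) = Lam (close_ty k x T) (close_tm (Suc k) x e)"
| "close_tm k x (TLam e) = TLam (close_tm k x e)"
| "close_tm k x (Cast l T1 T2) = Cast l (close_ty k x T1) (close_ty k x T2)"
| "close_tm k x (Op p es) = Op p (map (close_tm k x) es)"
| "close_tm k x (App e1 e2) = App (close_tm k x e1) (close_tm k x e2)"
| "close_tm k x (TApp e T) = TApp (close_tm k x e) (close_ty k x T)"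
| "close_tm k x (Check l T e1 e2) = Check l (close_ty k x T) (close_tm (Suc k) x e1) (close_tm k x e2)"
| "close_tm k x (Active l T e1 e2 v) =
     Active l (close_ty k x T) (close_tm (Suc k) x e1) (close_tm k x e2) (close_tm k x v)"
| "close_tm k x (Blame l) = Blame l"

text \<open>Substitution of a term for a free term variable: e[u/x].
  Capture-avoiding by construction (bound variables are indices).\<close>
primrec subst_ty :: "nat \<Rightarrow> ('b,'k,'p,'l) tm \<Rightarrow> ('b,'k,'p,'l) ty \<Rightarrow> ('b,'k,'p,'l) ty"
and subst_tm :: "nat \<Rightarrow> ('b,'k,'p,'l) tm \<Rightarrow> ('b,'k,'p,'l) tm \<Rightarrow> ('b,'k,'p,'l) tm" where
  "subst_ty x u (TBase b) = TBase b"
| "subst_ty x u (TBVar n) = TBVar n"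
| "subst_ty x u (TFVar a) = TFVar a"
| "subst_ty x u (TFun T1 T2) = TFun (subst_ty x u T1) (subst_ty x u T2)"
| "subst_ty x u (TAll T) = TAll (subst_ty x u T)"
| "subst_ty x u (TRef T e) = TRef (subst_ty x u T) (subst_tm x u e)"
| "subst_tm x u (Const c) = Const c"
| "subst_tm x u (BVar n) = BVar n"
| "subst_tm x u (FVar y) = (if y = x then u else FVar y)"
| "subst_tm x u (Lam T e) = Lam (subst_ty x u T) (subst_tm x u e)"
| "subst_tm x u (TLam e) = TLam (subst_tm x u e)"
| "subst_tm x u (Cast l T1 T2) = Cast l (subst_ty x u T1) (subst_ty x u T2)"
| "subst_tm x u (Op p es) = Op p (map (subst_tm x u) es)"
| "subst_tm x u (App e1 e2) = App (subst_tm x u e1) (subst_tm x u e2)"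
| "subst_tm x u (TApp e T) = TApp (subst_tm x u e) (subst_ty x u T)"
| "subst_tm x u (Check l T e1 e2) = Check l (subst_ty x u T) (subst_tm x u e1) (subst_tm x u e2)"
| "subst_tm x u (Active l T e1 e2 v) =
     Active l (subst_ty x u T) (subst_tm x u e1) (subst_tm x u e2) (subst_tm x u v)"
| "subst_tm x u (Blame l) = Blame l"

primrec fv_ty :: "('b,'k,'p,'l) ty \<Rightarrow> nat set"
and fv_tm :: "('b,'k,'p,'l) tm \<Rightarrow> nat set" where
  "fv_ty (TBase b) = {}"
| "fv_ty (TBVar n) = {}"
| "fv_ty (TFVar a) = {}"
| "fv_ty (TFun T1 T2) = fv_ty T1 \<union> fv_ty T2"
| "fv_ty (TAll T) = fv_ty T"
| "fv_ty (TRef T e) = fv_ty T \<union> fv_tm e"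
| "fv_tm (Const c) = {}"
| "fv_tm (BVar n) = {}"
| "fv_tm (FVar y) = {y}"
| "fv_tm (Lam T e) = fv_ty T \<union> fv_tm e"
| "fv_tm (TLam e) = fv_tm e"
| "fv_tm (Cast l T1 T2) = fv_ty T1 \<union> fv_ty T2"
| "fv_tm (Op p es) = \<Union> (set (map fv_tm es))"
| "fv_tm (App e1 e2) = fv_tm e1 \<union> fv_tm e2"
| "fv_tm (TApp e T) = fv_tm e \<union> fv_ty T"
| "fv_tm (Check l T e1 e2) = fv_ty T \<union> fv_tm e1 \<union> fv_tm e2"
| "fv_tm (Active l T e1 e2 v) = fv_ty T \<union> fv_tm e1 \<union> fv_tm e2 \<union> fv_tm v"
| "fv_tm (Blame l) = {}"

primrec lc_ty :: "nat \<Rightarrow> nat \<Rightarrow> ('b,'k,'p,'l) ty \<Rightarrow> bool"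
and lc_tm :: "nat \<Rightarrow> nat \<Rightarrow> ('b,'k,'p,'l) tm \<Rightarrow> bool" where
  "lc_ty k j (TBase b) = True"
| "lc_ty k j (TBVar n) = (n < j)"
| "lc_ty k j (TFVar a) = True"
| "lc_ty k j (TFun T1 T2) = (lc_ty k j T1 \<and> lc_ty (Suc k) j T2)"
| "lc_ty k j (TAll T) = lc_ty k (Suc j) T"
| "lc_ty k j (TRef T e) = (lc_ty k j T \<and> lc_tm (Suc k) j e)"
| "lc_tm k j (Const c) = True"
| "lc_tm k j (BVar n) = (n < k)"
| "lc_tm k j (FVar y) = True"
| "lc_tm k j (Lam T e) = (lc_ty k j T \<and> lc_tm (Suc k) j e)"
| "lc_tm k j (TLam e) = lc_tm k (Suc j) e"
| "lc_tm k j (Cast l T1 T2) = (lc_ty k j T1 \<and> lc_ty k j T2)"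
| "lc_tm k j (Op p es) = list_all id (map (lc_tm k j) es)"
| "lc_tm k j (App e1 e2) = (lc_tm k j e1 \<and> lc_tm k j e2)"
| "lc_tm k j (TApp e T) = (lc_tm k j e \<and> lc_ty k j T)"
| "lc_tm k j (Check l T e1 e2) = (lc_ty k j T \<and> lc_tm (Suc k) j e1 \<and> lc_tm k j e2)"
| "lc_tm k j (Active l T e1 e2 v) =
     (lc_ty k j T \<and> lc_tm (Suc k) j e1 \<and> lc_tm k j e2 \<and> lc_tm k j v)"
| "lc_tm k j (Blame l) = True"

text \<open>Grammar restriction: the third component of an active check must be a value.\<close>
primrec gr_ty :: "('b,'k,'p,'l) ty \<Rightarrow> bool"
and gr_tm :: "('b,'k,'p,'l) tm \<Rightarrow> bool" where
  "gr_ty (TBase b) = True"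
| "gr_ty (TBVar n) = True"
| "gr_ty (TFVar a) = True"
| "gr_ty (TFun T1 T2) = (gr_ty T1 \<and> gr_ty T2)"
| "gr_ty (TAll T) = gr_ty T"
| "gr_ty (TRef T e) = (gr_ty T \<and> gr_tm e)"
| "gr_tm (Const c) = True"
| "gr_tm (BVar n) = True"
| "gr_tm (FVar y) = True"
| "gr_tm (Lam T e) = (gr_ty T \<and> gr_tm e)"
| "gr_tm (TLam e) = gr_tm e"
| "gr_tm (Cast l T1 T2) = (gr_ty T1 \<and> gr_ty T2)"
| "gr_tm (Op p es) = list_all id (map gr_tm es)"
| "gr_tm (App e1 e2) = (gr_tm e1 \<and> gr_tm e2)"
| "gr_tm (TApp e T) = (gr_tm e \<and> gr_ty T)"
| "gr_tm (Check l T e1 e2) = (gr_ty T \<and> gr_tm e1 \<and> gr_tm e2)"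
| "gr_tm (Active l T e1 e2 v) = (gr_ty T \<and> gr_tm e1 \<and> gr_tm e2 \<and> gr_tm v \<and> is_val v)"
| "gr_tm (Blame l) = True"

definition is_term :: "('b,'k,'p,'l) tm \<Rightarrow> bool" where
  "is_term e \<longleftrightarrow> lc_tm 0 0 e \<and> gr_tm e"

text \<open>Reduction (the primitive reduction relation, parametric in the denotation
  \<open>\<delta>\<close> of the primitive operations: a partial function on tuples of constants).\<close>
inductive red :: "('p \<Rightarrow> 'k const list \<Rightarrow> 'k const option)
    \<Rightarrow> ('b,'k,'p,'l) tm \<Rightarrow> ('b,'k,'p,'l) tm \<Rightarrow> bool" for \<delta> where
  r_op: "\<delta> p ks = Some k \<Longrightarrow> red \<delta> (Op p (map Const ks)) (Const k)"
| r_beta: "is_val v \<Longrightarrow> red \<delta> (App (Lam T e) v) (open_tm 0 v e)"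
| r_tbeta: "red \<delta> (TApp (TLam e) T) (openT_tm 0 T e)"
| r_cbase: "is_val v \<Longrightarrow> red \<delta> (App (Cast l (TBase B) (TBase B)) v) v"
| r_cfun: "is_val v \<Longrightarrow> a \<noteq> b \<Longrightarrow>
     a \<notin> fv_ty T11 \<union> fv_ty T12 \<union> fv_ty T21 \<union> fv_ty T22 \<union> fv_tm v \<Longrightarrow>
     b \<notin> fv_ty T11 \<union> fv_ty T12 \<union> fv_ty T21 \<union> fv_ty T22 \<union> fv_tm v \<Longrightarrow>
     red \<delta> (App (Cast l (TFun T11 T12) (TFun T21 T22)) v)
       (Lam T21 (close_tm 0 a
          (App (Lam T11 (close_tm 0 b
                   (App (Cast l (open_ty 0 (FVar b) T12) (open_ty 0 (FVar a) T22))
                        (App v (FVar b)))))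
               (App (Cast l T21 T11) (FVar a)))))"
| r_call: "is_val v \<Longrightarrow>
     red \<delta> (App (Cast l (TAll T1) (TAll T2)) v) (TLam (App (Cast l T1 T2) (TApp v (TBVar 0))))"
| r_cforget: "is_val v \<Longrightarrow> red \<delta> (App (Cast l (TRef T1 e1) T2) v) (App (Cast l T1 T2) v)"
| r_cprecheck: "is_val v \<Longrightarrow> \<not> is_ref T1 \<Longrightarrow>
     red \<delta> (App (Cast l T1 (TRef T2 e2)) v) (Check l T2 e2 (App (Cast l T1 T2) v))"
| r_check: "is_val v \<Longrightarrow> red \<delta> (Check l T e v) (Active l T e (open_tm 0 v e) v)"
| r_ok: "is_val v \<Longrightarrow> red \<delta> (Active l T e (Const (CBool True)) v) v"
| r_fail: "is_val v \<Longrightarrow> red \<delta> (Active l T e (Const (CBool False)) v) (Blame l)"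

datatype ('b,'k,'p,'l) ctx =
    Hole
  | COp 'p "('b,'k,'p,'l) tm list" "('b,'k,'p,'l) ctx" "('b,'k,'p,'l) tm list"
  | CAppL "('b,'k,'p,'l) ctx" "('b,'k,'p,'l) tm"
  | CAppR "('b,'k,'p,'l) tm" "('b,'k,'p,'l) ctx"
  | CTApp "('b,'k,'p,'l) ctx" "('b,'k,'p,'l) ty"
  | CCheck 'l "('b,'k,'p,'l) ty" "('b,'k,'p,'l) tm" "('b,'k,'p,'l) ctx"
  | CActive 'l "('b,'k,'p,'l) ty" "('b,'k,'p,'l) tm" "('b,'k,'p,'l) ctx" "('b,'k,'p,'l) tm"

primrec ctx_ok :: "('b,'k,'p,'l) ctx \<Rightarrow> bool" where
  "ctx_ok Hole = True"
| "ctx_ok (COp p vs E es) = ((\<forall>v\<in>set vs. is_val v) \<and> ctx_ok E)"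
| "ctx_ok (CAppL E e) = ctx_ok E"
| "ctx_ok (CAppR v E) = (is_val v \<and> ctx_ok E)"
| "ctx_ok (CTApp E T) = ctx_ok E"
| "ctx_ok (CCheck l T e E) = ctx_ok E"
| "ctx_ok (CActive l T e E v) = (is_val v \<and> ctx_ok E)"

primrec fill :: "('b,'k,'p,'l) ctx \<Rightarrow> ('b,'k,'p,'l) tm \<Rightarrow> ('b,'k,'p,'l) tm" where
  "fill Hole t = t"
| "fill (COp p vs E es) t = Op p (vs @ [fill E t] @ es)"
| "fill (CAppL E e) t = App (fill E t) e"
| "fill (CAppR v E) t = App v (fill E t)"
| "fill (CTApp E T) t = TApp (fill E t) T"
| "fill (CCheck l T e E) t = Check l T e (fill E t)"
| "fill (CActive l T e E v) t = Active l T e (fill E t) v"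

inductive step :: "('p \<Rightarrow> 'k const list \<Rightarrow> 'k const option)
    \<Rightarrow> ('b,'k,'p,'l) tm \<Rightarrow> ('b,'k,'p,'l) tm \<Rightarrow> bool" for \<delta> where
  s_red: "red \<delta> e1 e2 \<Longrightarrow> ctx_ok E \<Longrightarrow> step \<delta> (fill E e1) (fill E e2)"
| s_blame: "ctx_ok E \<Longrightarrow> E \<noteq> Hole \<Longrightarrow> step \<delta> (fill E (Blame l)) (Blame l)"

abbreviation steps where "steps \<delta> \<equiv> (step \<delta>)\<^sup>*\<^sup>*"

end

(*
  Fix a step e1 --> e2 between closed terms and write t ~ t' when t' arises from t by
  replacing some occurrences of e1 by e2, so that e[e1/x] ~ e[e2/x].  Evaluation is
  deterministic, so a copy of e1 in evaluation position steps to exactly e2, and every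
  other redex on either side has a counterpart on the other side that reduces by the same
  rule to a related term (on the left, copies of e1 standing opposite values e2 are first
  evaluated to e2).  Blame can reach the top after different numbers of steps on the two
  sides, so the simulation also relates any two terms that evaluate to the same blame.
  Values are related only to values and true only to true, hence evaluation to a value,
  and to true, transfers in both directions.
*)

theory Submission
  imports Defs
begin

inductive ctx_red :: "('p \<Rightarrow> 'k const list \<Rightarrow> 'k const option)
    \<Rightarrow> ('b,'k,'p,'l) tm \<Rightarrow> ('b,'k,'p,'l) tm \<Rightarrow> bool" for \<delta> where
  ctx_red_red: "red \<delta> r r' \<Longrightarrow> ctx_red \<delta> r r'"
| ctx_red_Op: "\<forall>v\<in>set vs. is_val v \<Longrightarrow> ctx_red \<delta> t t' \<Longrightarrow>
    ctx_red \<delta> (Op p (vs @ t # es)) (Op p (vs @ t' # es))"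
| ctx_red_AppL: "ctx_red \<delta> t t' \<Longrightarrow> ctx_red \<delta> (App t u) (App t' u)"
| ctx_red_AppR: "is_val v \<Longrightarrow> ctx_red \<delta> t t' \<Longrightarrow> ctx_red \<delta> (App v t) (App v t')"
| ctx_red_TApp: "ctx_red \<delta> t t' \<Longrightarrow> ctx_red \<delta> (TApp t T) (TApp t' T)"
| ctx_red_Check: "ctx_red \<delta> t t' \<Longrightarrow> ctx_red \<delta> (Check l T e t) (Check l T e t')"
| ctx_red_Active: "is_val v \<Longrightarrow> ctx_red \<delta> t t' \<Longrightarrow>
    ctx_red \<delta> (Active l T e t v) (Active l T e t' v)"

inductive ctx_blame :: "('b,'k,'p,'l) tm \<Rightarrow> 'l \<Rightarrow> bool" where
  ctx_blame_Blame: "ctx_blame (Blame l) l"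
| ctx_blame_Op: "\<forall>v\<in>set vs. is_val v \<Longrightarrow> ctx_blame t l \<Longrightarrow> ctx_blame (Op p (vs @ t # es)) l"
| ctx_blame_AppL: "ctx_blame t l \<Longrightarrow> ctx_blame (App t u) l"
| ctx_blame_AppR: "is_val v \<Longrightarrow> ctx_blame t l \<Longrightarrow> ctx_blame (App v t) l"
| ctx_blame_TApp: "ctx_blame t l \<Longrightarrow> ctx_blame (TApp t T) l"
| ctx_blame_Check: "ctx_blame t l \<Longrightarrow> ctx_blame (Check l' T e t) l"
| ctx_blame_Active: "is_val v \<Longrightarrow> ctx_blame t l \<Longrightarrow> ctx_blame (Active l' T e t v) l"

lemma ctx_red_fill: "ctx_red \<delta> t t' \<Longrightarrow> ctx_ok E \<Longrightarrow> ctx_red \<delta> (fill E t) (fill E t')"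
  by (induct E) (auto intro: ctx_red.intros)

lemma ctx_blame_fill: "ctx_blame t l \<Longrightarrow> ctx_ok E \<Longrightarrow> ctx_blame (fill E t) l"
  by (induct E) (auto intro: ctx_blame.intros)

lemma ctx_red_decompose:
  "ctx_red \<delta> t t' \<Longrightarrow> \<exists>E r r'. ctx_ok E \<and> red \<delta> r r' \<and> t = fill E r \<and> t' = fill E r'"
proof (induct rule: ctx_red.induct)
  case (ctx_red_red r r')
  then show ?case by (intro exI[of _ Hole]) auto
next
  case (ctx_red_Op vs t t' p es)
  then obtain E r r' where "ctx_ok E" "red \<delta> r r'" "t = fill E r" "t' = fill E r'" by blast
  with ctx_red_Op show ?case by (intro exI[of _ "COp p vs E es"]) auto
next
  case (ctx_red_AppL t t' u)
  then obtain E r r' where "ctx_ok E" "red \<delta> r r'" "t = fill E r" "t' = fill E r'" by blast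
  then show ?case by (intro exI[of _ "CAppL E u"]) auto
next
  case (ctx_red_AppR v t t')
  then obtain E r r' where "ctx_ok E" "red \<delta> r r'" "t = fill E r" "t' = fill E r'" by blast
  with ctx_red_AppR show ?case by (intro exI[of _ "CAppR v E"]) auto
next
  case (ctx_red_TApp t t' T)
  then obtain E r r' where "ctx_ok E" "red \<delta> r r'" "t = fill E r" "t' = fill E r'" by blast
  then show ?case by (intro exI[of _ "CTApp E T"]) auto
next
  case (ctx_red_Check t t' l T e)
  then obtain E r r' where "ctx_ok E" "red \<delta> r r'" "t = fill E r" "t' = fill E r'" by blast
  then show ?case by (intro exI[of _ "CCheck l T e E"]) auto
next
  case (ctx_red_Active v t t' l T e)
  then obtain E r r' where "ctx_ok E" "red \<delta> r r'" "t = fill E r" "t' = fill E r'" by blast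
  with ctx_red_Active show ?case by (intro exI[of _ "CActive l T e E v"]) auto
qed

lemma ctx_blame_decompose: "ctx_blame t l \<Longrightarrow> \<exists>E. ctx_ok E \<and> t = fill E (Blame l)"
proof (induct rule: ctx_blame.induct)
  case (ctx_blame_Blame l)
  then show ?case by (intro exI[of _ Hole]) auto
next
  case (ctx_blame_Op vs t l p es)
  then obtain E where "ctx_ok E" "t = fill E (Blame l)" by blast
  with ctx_blame_Op show ?case by (intro exI[of _ "COp p vs E es"]) auto
next
  case (ctx_blame_AppL t l u)
  then obtain E where "ctx_ok E" "t = fill E (Blame l)" by blast
  then show ?case by (intro exI[of _ "CAppL E u"]) auto
next
  case (ctx_blame_AppR v t l)
  then obtain E where "ctx_ok E" "t = fill E (Blame l)" by blast
  with ctx_blame_AppR show ?case by (intro exI[of _ "CAppR v E"]) auto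
next
  case (ctx_blame_TApp t l T)
  then obtain E where "ctx_ok E" "t = fill E (Blame l)" by blast
  then show ?case by (intro exI[of _ "CTApp E T"]) auto
next
  case (ctx_blame_Check t l l' T e)
  then obtain E where "ctx_ok E" "t = fill E (Blame l)" by blast
  then show ?case by (intro exI[of _ "CCheck l' T e E"]) auto
next
  case (ctx_blame_Active v t l l' T e)
  then obtain E where "ctx_ok E" "t = fill E (Blame l)" by blast
  with ctx_blame_Active show ?case by (intro exI[of _ "CActive l' T e E v"]) auto
qed

lemma step_iff:
  "step \<delta> t t' \<longleftrightarrow> ctx_red \<delta> t t' \<or> (\<exists>l. ctx_blame t l \<and> t \<noteq> Blame l \<and> t' = Blame l)"
proof
  assume "step \<delta> t t'"
  then show "ctx_red \<delta> t t' \<or> (\<exists>l. ctx_blame t l \<and> t \<noteq> Blame l \<and> t' = Blame l)"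
  proof cases
    case (s_blame E l)
    moreover have "fill E (Blame l) \<noteq> Blame l"
      using s_blame by (cases E) auto
    ultimately show ?thesis by (auto intro: ctx_blame_fill ctx_blame_Blame)
  qed (auto intro: ctx_red_fill ctx_red_red)
next
  assume "ctx_red \<delta> t t' \<or> (\<exists>l. ctx_blame t l \<and> t \<noteq> Blame l \<and> t' = Blame l)"
  then show "step \<delta> t t'"
    by (metis ctx_red_decompose ctx_blame_decompose fill.simps(1) step.intros)
qed

lemma open_lc:
  fixes T :: "('b,'k,'p,'l) ty" and t :: "('b,'k,'p,'l) tm"
  shows "lc_ty k j T \<Longrightarrow> k \<le> n \<Longrightarrow> open_ty n u T = T"
    and "lc_tm k j t \<Longrightarrow> k \<le> n \<Longrightarrow> open_tm n u t = t"
  by (induct T and t arbitrary: k j n and k j n) (auto simp: list_all_iff intro!: map_idI)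

lemma openT_lc:
  fixes T :: "('b,'k,'p,'l) ty" and t :: "('b,'k,'p,'l) tm"
  shows "lc_ty k j T \<Longrightarrow> j \<le> n \<Longrightarrow> openT_ty n U T = T"
    and "lc_tm k j t \<Longrightarrow> j \<le> n \<Longrightarrow> openT_tm n U t = t"
  by (induct T and t arbitrary: k j n and k j n) (auto simp: list_all_iff intro!: map_idI)

lemma close_fresh:
  fixes T :: "('b,'k,'p,'l) ty" and t :: "('b,'k,'p,'l) tm"
  shows "x \<notin> fv_ty T \<Longrightarrow> close_ty k x T = T"
    and "x \<notin> fv_tm t \<Longrightarrow> close_tm k x t = t"
  by (induct T and t arbitrary: k and k) (auto intro!: map_idI)

lemma close_open:
  fixes T :: "('b,'k,'p,'l) ty" and t :: "('b,'k,'p,'l) tm"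
  shows "x \<notin> fv_ty T \<Longrightarrow> close_ty k x (open_ty k (FVar x) T) = T"
    and "x \<notin> fv_tm t \<Longrightarrow> close_tm k x (open_tm k (FVar x) t) = t"
  by (induct T and t arbitrary: k and k) (auto intro!: map_idI)

lemma close_open_rename:
  fixes T :: "('b,'k,'p,'l) ty" and t :: "('b,'k,'p,'l) tm"
  shows "x \<notin> fv_ty T \<Longrightarrow> y \<notin> fv_ty T \<Longrightarrow>
      close_ty k x (open_ty j (FVar x) T) = close_ty k y (open_ty j (FVar y) T)"
    and "x \<notin> fv_tm t \<Longrightarrow> y \<notin> fv_tm t \<Longrightarrow>
      close_tm k x (open_tm j (FVar x) t) = close_tm k y (open_tm j (FVar y) t)"
  by (induct T and t arbitrary: k j and k j) auto

lemma fv_open: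
  fixes T :: "('b,'k,'p,'l) ty" and t :: "('b,'k,'p,'l) tm"
  shows "fv_ty (open_ty k u T) \<subseteq> fv_ty T \<union> fv_tm u"
    and "fv_tm (open_tm k u t) \<subseteq> fv_tm t \<union> fv_tm u"
  by (induct T and t arbitrary: k and k) (fastforce split: if_splits)+

lemma finite_fv:
  fixes T :: "('b,'k,'p,'l) ty" and t :: "('b,'k,'p,'l) tm"
  shows "finite (fv_ty T)" and "finite (fv_tm t)"
  by (induct T and t) auto

lemma is_val_open_tm: "is_val (open_tm k u v) \<longleftrightarrow> (if v = BVar k then is_val u else is_val v)"
  by (cases v) auto

lemma is_val_openT_tm: "is_val (openT_tm k U v) \<longleftrightarrow> is_val v"
  by (cases v) auto

lemma is_val_close_tm: "is_val (close_tm k y v) \<longleftrightarrow> v \<noteq> FVar y \<and> is_val v"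
  by (cases v) auto

lemma is_val_subst_tm: "is_val v \<Longrightarrow> is_val (subst_tm x u v)"
  by (cases v) auto

lemma ex_two_fresh:
  assumes "infinite (UNIV :: 'a set)" "finite (S :: 'a set)"
  shows "\<exists>c d. c \<noteq> d \<and> c \<notin> S \<and> d \<notin> S"
  by (metis assms ex_new_if_finite finite_insert insertCI)

definition cast_fun_result where
  "cast_fun_result l T11 T12 T21 T22 v a b = Lam T21 (close_tm 0 a
     (App (Lam T11 (close_tm 0 b
              (App (Cast l (open_ty 0 (FVar b) T12) (open_ty 0 (FVar a) T22)) (App v (FVar b)))))
          (App (Cast l T21 T11) (FVar a))))"

abbreviation cast_fun_fresh where
  "cast_fun_fresh a T11 T12 T21 T22 v \<equiv>
     a \<notin> fv_ty T11 \<union> fv_ty T12 \<union> fv_ty T21 \<union> fv_ty T22 \<union> fv_tm v"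

lemma red_cast_fun_iff:
  "red \<delta> (App (Cast l (TFun T11 T12) (TFun T21 T22)) v) r \<longleftrightarrow>
     is_val v \<and> (\<exists>a b. a \<noteq> b \<and> cast_fun_fresh a T11 T12 T21 T22 v \<and>
       cast_fun_fresh b T11 T12 T21 T22 v \<and> r = cast_fun_result l T11 T12 T21 T22 v a b)"
  (is "?red \<longleftrightarrow> _")
proof
  assume ?red
  then show "is_val v \<and> (\<exists>a b. a \<noteq> b \<and> cast_fun_fresh a T11 T12 T21 T22 v \<and>
       cast_fun_fresh b T11 T12 T21 T22 v \<and> r = cast_fun_result l T11 T12 T21 T22 v a b)"
    by cases (auto simp only: cast_fun_result_def[symmetric])
qed (auto simp only: cast_fun_result_def intro: red.r_cfun)

lemma cast_fun_result_locally_nameless: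
  assumes "a \<noteq> b" "cast_fun_fresh a T11 T12 T21 T22 v" "cast_fun_fresh b T11 T12 T21 T22 v"
  shows "cast_fun_result l T11 T12 T21 T22 v a b =
    Lam T21 (App (Lam T11 (App (Cast l T12 (close_ty 1 a (open_ty 0 (FVar a) T22)))
                                (App v (BVar 0))))
                 (App (Cast l T21 T11) (BVar 0)))"
proof -
  have "b \<notin> fv_ty (open_ty 0 (FVar a) T22)"
    using fv_open(1)[of 0 "FVar a" T22] assms by auto
  then show ?thesis
    using assms unfolding cast_fun_result_def by (simp add: close_fresh close_open)
qed

lemma cast_fun_result_rename:
  assumes "a \<noteq> b" "cast_fun_fresh a T11 T12 T21 T22 v" "cast_fun_fresh b T11 T12 T21 T22 v"
    and "c \<noteq> d" "cast_fun_fresh c T11 T12 T21 T22 v" "cast_fun_fresh d T11 T12 T21 T22 v"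
  shows "cast_fun_result l T11 T12 T21 T22 v a b = cast_fun_result l T11 T12 T21 T22 v c d"
  using assms by (simp add: cast_fun_result_locally_nameless close_open_rename(1)[of a T22 c])

section \<open>Determinism of evaluation\<close>

lemma red_det: "red \<delta> r r1 \<Longrightarrow> red \<delta> r r2 \<Longrightarrow> r1 = r2"
proof (induct rule: red.induct)
  case (r_cfun v a b T11 T12 T21 T22 l)
  then obtain c d where "c \<noteq> d" "cast_fun_fresh c T11 T12 T21 T22 v"
      "cast_fun_fresh d T11 T12 T21 T22 v" "r2 = cast_fun_result l T11 T12 T21 T22 v c d"
    unfolding red_cast_fun_iff by blast
  with r_cfun show ?case
    by (metis cast_fun_result_def cast_fun_result_rename)
qed (erule red.cases; auto simp: inj_def)+

lemma red_operands_are_vals: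
  "red \<delta> (App t u) r \<Longrightarrow> is_val t \<and> is_val u"
  "red \<delta> (TApp t T) r \<Longrightarrow> is_val t"
  "red \<delta> (Op p (vs @ t # es)) r \<Longrightarrow> is_val t"
  "red \<delta> (Check l T e t) r \<Longrightarrow> is_val t"
  "red \<delta> (Active l T e t v) r \<Longrightarrow> is_val t \<and> is_val v"
  by (erule red.cases; auto simp: append_eq_map_conv Cons_eq_map_conv)+

lemma red_not_val: "red \<delta> r r' \<Longrightarrow> \<not> is_val r"
  by (induct rule: red.induct) auto

lemma ctx_red_not_val: "ctx_red \<delta> t t' \<Longrightarrow> \<not> is_val t"
  by (induct rule: ctx_red.induct) (auto dest: red_not_val)

lemma ctx_blame_not_val: "ctx_blame t l \<Longrightarrow> \<not> is_val t"
  by (induct rule: ctx_blame.induct) auto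

lemma append_Cons_eq_first_non:
  assumes "\<forall>x\<in>set xs. P x" "\<forall>x\<in>set xs'. P x" "\<not> P y" "\<not> P y'"
    and "xs @ y # zs = xs' @ y' # zs'"
  shows "xs = xs' \<and> y = y' \<and> zs = zs'"
  using assms
proof (induct xs arbitrary: xs')
  case Nil then show ?case by (cases xs') auto
next
  case (Cons a xs) then show ?case by (cases xs') auto
qed

lemma red_ctx_red_det: "red \<delta> r r' \<Longrightarrow> ctx_red \<delta> r t \<Longrightarrow> t = r'"
  by (erule ctx_red.cases) (auto dest: red_operands_are_vals ctx_red_not_val intro: red_det)

lemma ctx_red_det: "ctx_red \<delta> t t1 \<Longrightarrow> ctx_red \<delta> t t2 \<Longrightarrow> t1 = t2"
proof (induct arbitrary: t2 rule: ctx_red.induct)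
  case (ctx_red_red r r')
  then show ?case by (metis red_ctx_red_det)
next
  case (ctx_red_Op vs t t' p es)
  note vals = ctx_red_Op.hyps(1) and red_t = ctx_red_Op.hyps(2) and IH = ctx_red_Op.hyps(3)
  from ctx_red_Op.prems show ?case
  proof cases
    case (ctx_red_Op vs' u u' es')
    then have "vs = vs' \<and> t = u \<and> es = es'"
      using vals red_t
      by (intro append_Cons_eq_first_non[where P = is_val]) (auto dest: ctx_red_not_val)
    with ctx_red_Op IH show ?thesis by blast
  qed (use red_t in \<open>blast dest: red_operands_are_vals ctx_red_not_val\<close>)
qed (erule ctx_red.cases; blast dest: ctx_red_not_val red_operands_are_vals)+

lemma ctx_blame_not_ctx_red: "ctx_blame t l \<Longrightarrow> \<not> ctx_red \<delta> t t'"
proof (induct arbitrary: t' rule: ctx_blame.induct)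
  case (ctx_blame_Op vs t l p es)
  note vals = ctx_blame_Op.hyps(1) and blame_t = ctx_blame_Op.hyps(2) and IH = ctx_blame_Op.hyps(3)
  show ?case
  proof
    assume "ctx_red \<delta> (Op p (vs @ t # es)) t'"
    then show False
    proof cases
      case (ctx_red_Op vs' u u' es')
      then have "vs = vs' \<and> t = u \<and> es = es'"
        using vals blame_t
        by (intro append_Cons_eq_first_non[where P = is_val]) (auto dest: ctx_red_not_val ctx_blame_not_val)
      with ctx_red_Op IH show False by blast
    qed (use blame_t in \<open>blast dest: red_operands_are_vals ctx_blame_not_val\<close>)
  qed
qed (blast elim: ctx_red.cases red.cases dest: red_operands_are_vals ctx_red_not_val ctx_blame_not_val)+

lemma ctx_blame_det: "ctx_blame t l1 \<Longrightarrow> ctx_blame t l2 \<Longrightarrow> l1 = l2"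
proof (induct arbitrary: l2 rule: ctx_blame.induct)
  case (ctx_blame_Op vs t l p es)
  note vals = ctx_blame_Op.hyps(1) and blame_t = ctx_blame_Op.hyps(2) and IH = ctx_blame_Op.hyps(3)
  from ctx_blame_Op.prems show ?case
  proof cases
    case (ctx_blame_Op vs' u es')
    then have "vs = vs' \<and> t = u \<and> es = es'"
      using vals blame_t
      by (intro append_Cons_eq_first_non[where P = is_val]) (auto dest: ctx_blame_not_val)
    with ctx_blame_Op IH show ?thesis by blast
  qed
qed (erule ctx_blame.cases; blast dest: ctx_blame_not_val)+

lemma step_det: "step \<delta> t t1 \<Longrightarrow> step \<delta> t t2 \<Longrightarrow> t1 = t2"
  unfolding step_iff by (metis ctx_red_det ctx_blame_det ctx_blame_not_ctx_red)

lemma val_no_step: "is_val v \<Longrightarrow> \<not> step \<delta> v t"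
  unfolding step_iff by (auto dest: ctx_red_not_val ctx_blame_not_val)

lemma Blame_no_step: "\<not> step \<delta> (Blame l) t"
  unfolding step_iff by (auto elim: ctx_red.cases red.cases ctx_blame.cases)

lemma BVar_no_step: "\<not> step \<delta> (BVar n) t"
  unfolding step_iff by (auto elim: ctx_red.cases red.cases ctx_blame.cases)

lemma FVar_no_step: "\<not> step \<delta> (FVar n) t"
  unfolding step_iff by (auto elim: ctx_red.cases red.cases ctx_blame.cases)

lemma steps_from_val: "steps \<delta> v t \<Longrightarrow> is_val v \<Longrightarrow> t = v"
  by (auto elim: converse_rtranclpE simp: val_no_step)

lemma steps_from_Blame: "steps \<delta> (Blame l) t \<Longrightarrow> t = Blame l"
  by (auto elim: converse_rtranclpE simp: Blame_no_step)

lemma red_step: "red \<delta> r r' \<Longrightarrow> step \<delta> r r'"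
  unfolding step_iff by (blast intro: ctx_red_red)

lemma ctx_red_step: "ctx_red \<delta> t t' \<Longrightarrow> step \<delta> t t'"
  unfolding step_iff by blast

lemma ctx_blame_steps: "ctx_blame t l \<Longrightarrow> steps \<delta> t (Blame l)"
  by (cases "t = Blame l") (auto simp: step_iff)

lemma ctx_red_steps_fill:
  "(ctx_red \<delta>)\<^sup>*\<^sup>* t t' \<Longrightarrow> ctx_ok E \<Longrightarrow> steps \<delta> (fill E t) (fill E t')"
  by (induct rule: rtranclp_induct) (auto intro: rtranclp.rtrancl_into_rtrancl ctx_red_step ctx_red_fill)

lemma steps_fill:
  assumes "steps \<delta> t t'" "ctx_ok E"
  shows "\<exists>u. steps \<delta> (fill E t) u \<and> (u = fill E t' \<or> (\<exists>l. t' = Blame l \<and> u = Blame l))"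
  using assms(1)
proof (induct rule: rtranclp_induct)
  case (step t1 t2)
  then obtain u where u: "steps \<delta> (fill E t) u" "u = fill E t1 \<or> (\<exists>l. t1 = Blame l \<and> u = Blame l)"
    by blast
  have "t1 \<noteq> Blame l" for l
    using step.hyps(2) Blame_no_step by metis
  with u have u_fill: "u = fill E t1" by blast
  from step.hyps(2) consider "ctx_red \<delta> t1 t2" | l where "ctx_blame t1 l" "t2 = Blame l"
    unfolding step_iff by blast
  then show ?case
  proof cases
    case 1
    then have "step \<delta> (fill E t1) (fill E t2)"
      using assms(2) by (intro ctx_red_step ctx_red_fill)
    with u(1) u_fill show ?thesis by (blast intro: rtranclp.rtrancl_into_rtrancl)
  next
    case (2 l)
    then have "steps \<delta> (fill E t1) (Blame l)"
      using assms(2) by (intro ctx_blame_steps ctx_blame_fill)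
    with u(1) u_fill have "steps \<delta> (fill E t) (Blame l)" by simp
    with 2 show ?thesis by blast
  qed
qed blast

lemma steps_fill_Blame:
  assumes "steps \<delta> t (Blame l)" "ctx_ok E"
  shows "steps \<delta> (fill E t) (Blame l)"
proof -
  have "steps \<delta> (fill E (Blame l)) (Blame l)"
    using assms(2) by (intro ctx_blame_steps ctx_blame_fill ctx_blame_Blame)
  with steps_fill[OF assms] show ?thesis by (auto intro: rtranclp_trans)
qed

lemma step_preserves_steps_Blame:
  "step \<delta> a a' \<Longrightarrow> steps \<delta> a (Blame l) \<Longrightarrow> steps \<delta> a' (Blame l)"
  by (metis converse_rtranclpE step_det Blame_no_step)

lemma rtranclp_simulation_final:
  assumes sim: "\<And>a a' b. S a b \<Longrightarrow> r a a' \<Longrightarrow> \<exists>b'. r\<^sup>*\<^sup>* b b' \<and> S a' b'"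
    and final: "\<And>a b. S a b \<Longrightarrow> Q a \<Longrightarrow> \<exists>b'. r\<^sup>*\<^sup>* b b' \<and> P a b'"
    and "r\<^sup>*\<^sup>* a a'" "Q a'" "S a b"
  shows "\<exists>b'. r\<^sup>*\<^sup>* b b' \<and> P a' b'"
  using assms(3,5)
proof (induct arbitrary: b rule: converse_rtranclp_induct)
  case base
  then show ?case using final assms(4) by blast
next
  case (step a a0)
  then obtain b0 where "r\<^sup>*\<^sup>* b b0" "S a0 b0" using sim by blast
  with step.hyps(3) show ?case by (blast intro: rtranclp_trans)
qed

section \<open>Replacing a term by its reduct\<close>

lemma list_all2_append_Cons1:
  "list_all2 P (xs @ y # zs) ys' \<Longrightarrow>
     \<exists>xs' y' zs'. ys' = xs' @ y' # zs' \<and> list_all2 P xs xs' \<and> P y y' \<and> list_all2 P zs zs'"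
  by (auto simp: list_all2_append1 list_all2_Cons1)

lemma list_all2_append_Cons2:
  "list_all2 P xs' (ys @ y # zs) \<Longrightarrow>
     \<exists>xs x zs'. xs' = xs @ x # zs' \<and> list_all2 P xs ys \<and> P x y \<and> list_all2 P zs' zs"
  by (auto simp: list_all2_append2 list_all2_Cons2)

lemma list_all2_conjD1: "list_all2 (\<lambda>x y. P x y \<and> Q x y) xs ys \<Longrightarrow> list_all2 P xs ys"
  by (erule list_all2_mono) simp

locale replace_step =
  fixes \<delta> :: "'p \<Rightarrow> 'k const list \<Rightarrow> 'k const option" and e1 e2 :: "('b,'k,'p,'l) tm"
  assumes step_e1: "step \<delta> e1 e2" and lc_e1: "lc_tm 0 0 e1" and lc_e2: "lc_tm 0 0 e2"
begin

lemma e1_not_val [simp]: "\<not> is_val e1"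
  using step_e1 val_no_step by metis

lemma e1_neq [simp]:
  "e1 \<noteq> Const c" "e1 \<noteq> Lam T t" "e1 \<noteq> TLam t" "e1 \<noteq> Cast l T1 T2"
  "e1 \<noteq> Blame l" "e1 \<noteq> BVar n" "e1 \<noteq> FVar y"
  using step_e1 val_no_step[of _ \<delta> e2] Blame_no_step BVar_no_step FVar_no_step by force+

lemma e2_neq_BVar [simp]: "e2 \<noteq> BVar n"
  using lc_e2 by auto

inductive repl_ty :: "('b,'k,'p,'l) ty \<Rightarrow> ('b,'k,'p,'l) ty \<Rightarrow> bool"
  and repl_tm :: "('b,'k,'p,'l) tm \<Rightarrow> ('b,'k,'p,'l) tm \<Rightarrow> bool" where
  repl_e1: "repl_tm e1 e2"
| repl_TBase: "repl_ty (TBase b) (TBase b)"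
| repl_TBVar: "repl_ty (TBVar n) (TBVar n)"
| repl_TFVar: "repl_ty (TFVar a) (TFVar a)"
| repl_TFun: "repl_ty T1 T1' \<Longrightarrow> repl_ty T2 T2' \<Longrightarrow> repl_ty (TFun T1 T2) (TFun T1' T2')"
| repl_TAll: "repl_ty T T' \<Longrightarrow> repl_ty (TAll T) (TAll T')"
| repl_TRef: "repl_ty T T' \<Longrightarrow> repl_tm t t' \<Longrightarrow> repl_ty (TRef T t) (TRef T' t')"
| repl_Const: "repl_tm (Const c) (Const c)"
| repl_BVar: "repl_tm (BVar n) (BVar n)"
| repl_FVar: "repl_tm (FVar y) (FVar y)"
| repl_Lam: "repl_ty T T' \<Longrightarrow> repl_tm t t' \<Longrightarrow> repl_tm (Lam T t) (Lam T' t')"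
| repl_TLam: "repl_tm t t' \<Longrightarrow> repl_tm (TLam t) (TLam t')"
| repl_Cast: "repl_ty T1 T1' \<Longrightarrow> repl_ty T2 T2' \<Longrightarrow> repl_tm (Cast l T1 T2) (Cast l T1' T2')"
| repl_Op: "list_all2 repl_tm ts ts' \<Longrightarrow> repl_tm (Op p ts) (Op p ts')"
| repl_App: "repl_tm t t' \<Longrightarrow> repl_tm u u' \<Longrightarrow> repl_tm (App t u) (App t' u')"
| repl_TApp: "repl_tm t t' \<Longrightarrow> repl_ty T T' \<Longrightarrow> repl_tm (TApp t T) (TApp t' T')"
| repl_Check: "repl_ty T T' \<Longrightarrow> repl_tm t t' \<Longrightarrow> repl_tm u u' \<Longrightarrow>
    repl_tm (Check l T t u) (Check l T' t' u')"
| repl_Active: "repl_ty T T' \<Longrightarrow> repl_tm t t' \<Longrightarrow> repl_tm u u' \<Longrightarrow> repl_tm v v' \<Longrightarrow>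
    is_val v = is_val v' \<Longrightarrow> repl_tm (Active l T t u v) (Active l T' t' u' v')"
    \<comment> \<open>otherwise a stuck check on \<open>e1\<close> could be related to a live one on \<open>e2\<close>\<close>
| repl_Blame: "repl_tm (Blame l) (Blame l)"
monos list.rel_mono

lemma repl_refl:
  fixes T :: "('b,'k,'p,'l) ty" and t :: "('b,'k,'p,'l) tm"
  shows "repl_ty T T" and "repl_tm t t"
  by (induct T and t) (auto intro: repl_ty_repl_tm.intros list.rel_refl_strong)

lemma repl_subst:
  fixes T :: "('b,'k,'p,'l) ty" and t :: "('b,'k,'p,'l) tm"
  shows "gr_ty T \<Longrightarrow> repl_ty (subst_ty x e1 T) (subst_ty x e2 T)"
    and "gr_tm t \<Longrightarrow> repl_tm (subst_tm x e1 t) (subst_tm x e2 t)"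
proof (induct T and t)
  case (Op p ts)
  then show ?case
    by (auto intro!: repl_Op list.rel_refl_strong simp: list.rel_map list_all_iff)
qed (auto intro: repl_ty_repl_tm.intros repl_refl is_val_subst_tm)

lemma repl_tm_BVar_iff: "repl_tm v v' \<Longrightarrow> v = BVar k \<longleftrightarrow> v' = BVar k"
  by (auto elim: repl_tm.cases)

lemma repl_tm_FVar_iff: "repl_tm v v' \<Longrightarrow> y \<notin> fv_tm e2 \<Longrightarrow> v = FVar y \<longleftrightarrow> v' = FVar y"
  by (auto elim: repl_tm.cases)

lemma repl_open:
  fixes T T' :: "('b,'k,'p,'l) ty" and t t' :: "('b,'k,'p,'l) tm"
  assumes "repl_tm u u'" "is_val u = is_val u'"
  shows "repl_ty T T' \<Longrightarrow> repl_ty (open_ty k u T) (open_ty k u' T')"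
    and "repl_tm t t' \<Longrightarrow> repl_tm (open_tm k u t) (open_tm k u' t')"
proof (induct arbitrary: k and k rule: repl_ty_repl_tm.inducts)
  case repl_e1
  then show ?case using open_lc(2)[OF lc_e1] open_lc(2)[OF lc_e2] by (simp add: repl_ty_repl_tm.repl_e1)
next
  case (repl_Op ts ts' p)
  then show ?case by (auto simp: list.rel_map intro!: repl_ty_repl_tm.repl_Op elim!: list_all2_mono)
next
  case (repl_Active T T' t t' v v' w w' l)
  then show ?case
    using assms(2) by (auto intro!: repl_ty_repl_tm.intros
        simp: is_val_open_tm repl_tm_BVar_iff[OF repl_Active(7)] split: if_splits)
qed (auto intro: repl_ty_repl_tm.intros assms)

lemma repl_openT:
  fixes T T' :: "('b,'k,'p,'l) ty" and t t' :: "('b,'k,'p,'l) tm"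
  assumes "repl_ty U U'"
  shows "repl_ty T T' \<Longrightarrow> repl_ty (openT_ty k U T) (openT_ty k U' T')"
    and "repl_tm t t' \<Longrightarrow> repl_tm (openT_tm k U t) (openT_tm k U' t')"
proof (induct arbitrary: k and k rule: repl_ty_repl_tm.inducts)
  case repl_e1
  then show ?case using openT_lc(2)[OF lc_e1] openT_lc(2)[OF lc_e2] by (simp add: repl_ty_repl_tm.repl_e1)
next
  case (repl_Op ts ts' p)
  then show ?case by (auto simp: list.rel_map intro!: repl_ty_repl_tm.repl_Op elim!: list_all2_mono)
qed (auto intro: repl_ty_repl_tm.intros assms simp: is_val_openT_tm)

lemma repl_close:
  fixes T T' :: "('b,'k,'p,'l) ty" and t t' :: "('b,'k,'p,'l) tm"
  assumes "y \<notin> fv_tm e1" "y \<notin> fv_tm e2"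
  shows "repl_ty T T' \<Longrightarrow> repl_ty (close_ty k y T) (close_ty k y T')"
    and "repl_tm t t' \<Longrightarrow> repl_tm (close_tm k y t) (close_tm k y t')"
proof (induct arbitrary: k and k rule: repl_ty_repl_tm.inducts)
  case repl_e1
  then show ?case using assms by (simp add: close_fresh repl_ty_repl_tm.repl_e1)
next
  case (repl_Op ts ts' p)
  then show ?case by (auto simp: list.rel_map intro!: repl_ty_repl_tm.repl_Op elim!: list_all2_mono)
next
  case (repl_Active T T' t t' v v' w w' l)
  then show ?case
    using assms(2) by (auto intro!: repl_ty_repl_tm.intros
        simp: is_val_close_tm repl_tm_FVar_iff[OF repl_Active(7)])
qed (auto intro: repl_ty_repl_tm.intros)

lemma repl_tm_val_left: "repl_tm a b \<Longrightarrow> is_val a \<Longrightarrow> is_val b"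
  by (erule repl_tm.cases) auto

lemma repl_tm_val_right: "repl_tm a b \<Longrightarrow> is_val b \<Longrightarrow> is_val a \<or> a = e1 \<and> b = e2"
  by (erule repl_tm.cases) auto

lemma repl_tm_Const_left: "repl_tm (Const c) b \<Longrightarrow> b = Const c"
  by (erule repl_tm.cases) auto

lemma repl_tm_Const_right: "repl_tm a (Const c) \<Longrightarrow> a = Const c \<or> a = e1 \<and> e2 = Const c"
  by (erule repl_tm.cases) auto

lemma repl_tm_Blame_left: "repl_tm (Blame l) b \<Longrightarrow> b = Blame l"
  by (erule repl_tm.cases) auto

lemma repl_tm_Blame_right: "repl_tm a (Blame l) \<Longrightarrow> a = Blame l \<or> a = e1 \<and> e2 = Blame l"
  by (erule repl_tm.cases) auto

lemma repl_tm_Lam_left: "repl_tm (Lam T t) b \<Longrightarrow> \<exists>T' t'. b = Lam T' t' \<and> repl_ty T T' \<and> repl_tm t t'"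
  by (erule repl_tm.cases) auto

lemma repl_tm_Lam_right:
  "repl_tm a (Lam T' t') \<Longrightarrow> is_val a \<Longrightarrow> \<exists>T t. a = Lam T t \<and> repl_ty T T' \<and> repl_tm t t'"
  by (erule repl_tm.cases) auto

lemma repl_tm_TLam_left: "repl_tm (TLam t) b \<Longrightarrow> \<exists>t'. b = TLam t' \<and> repl_tm t t'"
  by (erule repl_tm.cases) auto

lemma repl_tm_TLam_right: "repl_tm a (TLam t') \<Longrightarrow> is_val a \<Longrightarrow> \<exists>t. a = TLam t \<and> repl_tm t t'"
  by (erule repl_tm.cases) auto

lemma repl_tm_Cast_left:
  "repl_tm (Cast l T1 T2) b \<Longrightarrow> \<exists>T1' T2'. b = Cast l T1' T2' \<and> repl_ty T1 T1' \<and> repl_ty T2 T2'"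
  by (erule repl_tm.cases) auto

lemma repl_tm_Cast_right:
  "repl_tm a (Cast l T1' T2') \<Longrightarrow> is_val a \<Longrightarrow>
     \<exists>T1 T2. a = Cast l T1 T2 \<and> repl_ty T1 T1' \<and> repl_ty T2 T2'"
  by (erule repl_tm.cases) auto

lemma repl_ty_TBase_iff:
  "repl_ty (TBase B) T \<longleftrightarrow> T = TBase B" "repl_ty T (TBase B) \<longleftrightarrow> T = TBase B"
  by (auto elim: repl_ty.cases intro: repl_TBase)

lemma repl_ty_TFun_left:
  "repl_ty (TFun A B) T \<Longrightarrow> \<exists>A' B'. T = TFun A' B' \<and> repl_ty A A' \<and> repl_ty B B'"
  by (erule repl_ty.cases) auto

lemma repl_ty_TFun_right:
  "repl_ty T (TFun A' B') \<Longrightarrow> \<exists>A B. T = TFun A B \<and> repl_ty A A' \<and> repl_ty B B'"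
  by (erule repl_ty.cases) auto

lemma repl_ty_TAll_left: "repl_ty (TAll A) T \<Longrightarrow> \<exists>A'. T = TAll A' \<and> repl_ty A A'"
  by (erule repl_ty.cases) auto

lemma repl_ty_TAll_right: "repl_ty T (TAll A') \<Longrightarrow> \<exists>A. T = TAll A \<and> repl_ty A A'"
  by (erule repl_ty.cases) auto

lemma repl_ty_TRef_left:
  "repl_ty (TRef A e) T \<Longrightarrow> \<exists>A' e'. T = TRef A' e' \<and> repl_ty A A' \<and> repl_tm e e'"
  by (erule repl_ty.cases) auto

lemma repl_ty_TRef_right:
  "repl_ty T (TRef A' e') \<Longrightarrow> \<exists>A e. T = TRef A e \<and> repl_ty A A' \<and> repl_tm e e'"
  by (erule repl_ty.cases) auto

lemma repl_ty_is_ref: "repl_ty T T' \<Longrightarrow> is_ref T' = is_ref T"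
  by (erule repl_ty.cases) auto

lemma repl_cast_fun_result:
  assumes "repl_ty A11 B11" "repl_ty A12 B12" "repl_ty A21 B21" "repl_ty A22 B22" "repl_tm v w"
    and "c \<notin> fv_tm e1" "c \<notin> fv_tm e2" "d \<notin> fv_tm e1" "d \<notin> fv_tm e2"
  shows "repl_tm (cast_fun_result l A11 A12 A21 A22 v c d) (cast_fun_result l B11 B12 B21 B22 w c d)"
  unfolding cast_fun_result_def
  by (intro repl_ty_repl_tm.intros repl_close(2) repl_open(1) assms) simp_all

lemma repl_red_cast_fun:
  assumes "repl_ty T11 B11" "repl_ty T12 B12" "repl_ty T21 B21" "repl_ty T22 B22"
    and "repl_tm v w" "is_val v" "is_val w"
  shows "\<exists>a b. red \<delta> (App (Cast l (TFun T11 T12) (TFun T21 T22)) v) a \<and>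
      red \<delta> (App (Cast l (TFun B11 B12) (TFun B21 B22)) w) b \<and> repl_tm a b"
proof -
  let ?S = "fv_ty T11 \<union> fv_ty T12 \<union> fv_ty T21 \<union> fv_ty T22 \<union> fv_tm v \<union>
            fv_ty B11 \<union> fv_ty B12 \<union> fv_ty B21 \<union> fv_ty B22 \<union> fv_tm w \<union> fv_tm e1 \<union> fv_tm e2"
  \<comment> \<open>fresh for \<open>e1\<close> and \<open>e2\<close> as well, so that closing over them commutes with the replacement\<close>
  obtain c d where "c \<noteq> d" "c \<notin> ?S" "d \<notin> ?S"
    using ex_two_fresh[OF infinite_UNIV_nat, of ?S] by (auto simp: finite_fv)
  with assms show ?thesis
    unfolding red_cast_fun_iff by (blast intro: repl_cast_fun_result)
qed

lemma repl_red_App_fwd: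
  assumes "repl_tm a1 b1" "repl_tm a2 b2" "red \<delta> (App a1 a2) a'"
  shows "\<exists>b'. red \<delta> (App b1 b2) b' \<and> repl_tm a' b'"
  using assms(3)
proof cases
  case (r_beta T e)
  then obtain T' e' where "b1 = Lam T' e'" "repl_tm e e'"
    using repl_tm_Lam_left assms(1) by blast
  with r_beta assms(2) show ?thesis
    by (blast intro: red.r_beta repl_open(2) repl_tm_val_left)
next
  case (r_cbase l B)
  then have "b1 = Cast l (TBase B) (TBase B)"
    using assms(1) by (auto dest!: repl_tm_Cast_left simp: repl_ty_TBase_iff)
  with r_cbase assms(2) show ?thesis
    by (blast intro: red.r_cbase repl_tm_val_left)
next
  case (r_cfun a b T11 T12 T21 T22 l)
  then obtain B11 B12 B21 B22 where "b1 = Cast l (TFun B11 B12) (TFun B21 B22)"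
    and B: "repl_ty T11 B11" "repl_ty T12 B12" "repl_ty T21 B21" "repl_ty T22 B22"
    using assms(1) by (blast dest: repl_tm_Cast_left repl_ty_TFun_left)
  moreover have "is_val b2"
    using r_cfun assms(2) repl_tm_val_left by blast
  ultimately obtain a'' b' where "red \<delta> (App a1 a2) a''" "red \<delta> (App b1 b2) b'" "repl_tm a'' b'"
    using repl_red_cast_fun[OF B assms(2)] r_cfun by blast
  then show ?thesis
    using red_det assms(3) by blast
next
  case (r_call l T1 T2)
  then obtain B1 B2 where "b1 = Cast l (TAll B1) (TAll B2)" "repl_ty T1 B1" "repl_ty T2 B2"
    using assms(1) by (blast dest: repl_tm_Cast_left repl_ty_TAll_left)
  with r_call assms(2) show ?thesis
    by (blast intro: red.r_call repl_TLam repl_App repl_Cast repl_TApp repl_TBVar repl_tm_val_left)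
next
  case (r_cforget l T1 e T2)
  then obtain B1 e' B2 where "b1 = Cast l (TRef B1 e') B2" "repl_ty T1 B1" "repl_ty T2 B2"
    using assms(1) by (blast dest: repl_tm_Cast_left repl_ty_TRef_left)
  with r_cforget assms(2) show ?thesis
    by (blast intro: red.r_cforget repl_App repl_Cast repl_tm_val_left)
next
  case (r_cprecheck T1 l T2 e)
  then obtain B1 B2 e' where "b1 = Cast l B1 (TRef B2 e')" "repl_ty T1 B1" "repl_ty T2 B2" "repl_tm e e'"
    using assms(1) by (blast dest: repl_tm_Cast_left repl_ty_TRef_left)
  with r_cprecheck assms(2) show ?thesis
    by (blast intro: red.r_cprecheck repl_Check repl_App repl_Cast repl_tm_val_left dest: repl_ty_is_ref)
qed

lemma repl_red_App_bwd:
  assumes "repl_tm a1 b1" "repl_tm a2 b2" "is_val a1" "is_val a2" "red \<delta> (App b1 b2) b'"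
  shows "\<exists>a'. red \<delta> (App a1 a2) a' \<and> repl_tm a' b'"
  using assms(5)
proof cases
  case (r_beta T' e')
  then obtain T e where "a1 = Lam T e" "repl_tm e e'"
    using repl_tm_Lam_right assms(1,3) by blast
  with r_beta assms(2,4) show ?thesis
    by (blast intro: red.r_beta repl_open(2))
next
  case (r_cbase l B)
  then have "a1 = Cast l (TBase B) (TBase B)"
    using assms(1,3) by (auto dest!: repl_tm_Cast_right simp: repl_ty_TBase_iff)
  with r_cbase assms(2,4) show ?thesis
    by (blast intro: red.r_cbase)
next
  case (r_cfun a b B11 B12 B21 B22 l)
  then obtain T11 T12 T21 T22 where "a1 = Cast l (TFun T11 T12) (TFun T21 T22)"
    and A: "repl_ty T11 B11" "repl_ty T12 B12" "repl_ty T21 B21" "repl_ty T22 B22"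
    using assms(1,3) by (blast dest: repl_tm_Cast_right repl_ty_TFun_right)
  then obtain a' b'' where "red \<delta> (App a1 a2) a'" "red \<delta> (App b1 b2) b''" "repl_tm a' b''"
    using repl_red_cast_fun[OF A assms(2,4)] r_cfun by blast
  then show ?thesis
    using red_det assms(5) by blast
next
  case (r_call l T1 T2)
  then obtain A1 A2 where "a1 = Cast l (TAll A1) (TAll A2)" "repl_ty A1 T1" "repl_ty A2 T2"
    using assms(1,3) by (blast dest: repl_tm_Cast_right repl_ty_TAll_right)
  with r_call assms(2,4) show ?thesis
    by (blast intro: red.r_call repl_TLam repl_App repl_Cast repl_TApp repl_TBVar)
next
  case (r_cforget l T1 e T2)
  then obtain A1 e' A2 where "a1 = Cast l (TRef A1 e') A2" "repl_ty A1 T1" "repl_ty A2 T2"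
    using assms(1,3) by (blast dest: repl_tm_Cast_right repl_ty_TRef_right)
  with r_cforget assms(2,4) show ?thesis
    by (blast intro: red.r_cforget repl_App repl_Cast)
next
  case (r_cprecheck T1 l T2 e)
  then obtain A1 A2 e' where "a1 = Cast l A1 (TRef A2 e')" "repl_ty A1 T1" "repl_ty A2 T2" "repl_tm e' e"
    using assms(1,3) by (blast dest: repl_tm_Cast_right repl_ty_TRef_right)
  with r_cprecheck assms(2,4) show ?thesis
    by (blast intro: red.r_cprecheck repl_Check repl_App repl_Cast dest: repl_ty_is_ref)
qed

lemma repl_red_TApp_fwd:
  assumes "repl_tm a b" "repl_ty T T'" "red \<delta> (TApp a T) a'"
  shows "\<exists>b'. red \<delta> (TApp b T') b' \<and> repl_tm a' b'"
  using assms(3)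
proof cases
  case (r_tbeta e)
  with assms(1,2) show ?thesis
    by (blast dest: repl_tm_TLam_left intro: red.r_tbeta repl_openT(2))
qed

lemma repl_red_TApp_bwd:
  assumes "repl_tm a b" "repl_ty T T'" "is_val a" "red \<delta> (TApp b T') b'"
  shows "\<exists>a'. red \<delta> (TApp a T) a' \<and> repl_tm a' b'"
  using assms(4)
proof cases
  case (r_tbeta e')
  with assms(1-3) show ?thesis
    by (blast dest: repl_tm_TLam_right intro: red.r_tbeta repl_openT(2))
qed

lemma list_all2_repl_map_Const_left: "list_all2 repl_tm (map Const ks) ts' \<Longrightarrow> ts' = map Const ks"
  by (induct ks arbitrary: ts') (auto simp: list_all2_Cons1 dest: repl_tm_Const_left)

lemma list_all2_repl_map_Const_right:
  "list_all2 repl_tm ts (map Const ks) \<Longrightarrow> \<forall>t\<in>set ts. is_val t \<Longrightarrow> ts = map Const ks"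
  by (induct ks arbitrary: ts) (auto simp: list_all2_Cons2 dest: repl_tm_Const_right)

lemma repl_red_Op_fwd:
  assumes "list_all2 repl_tm ts ts'" "red \<delta> (Op p ts) a'"
  shows "\<exists>b'. red \<delta> (Op p ts') b' \<and> repl_tm a' b'"
  using assms(2)
proof cases
  case (r_op ks k)
  with assms(1) have "ts' = ts"
    using list_all2_repl_map_Const_left by blast
  with r_op show ?thesis
    by (blast intro: red.r_op repl_Const)
qed

lemma repl_red_Op_bwd:
  assumes "list_all2 repl_tm ts ts'" "\<forall>t\<in>set ts. is_val t" "red \<delta> (Op p ts') b'"
  shows "\<exists>a'. red \<delta> (Op p ts) a' \<and> repl_tm a' b'"
  using assms(3)
proof cases
  case (r_op ks k)
  with assms(1,2) have "ts = ts'"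
    using list_all2_repl_map_Const_right by blast
  with r_op show ?thesis
    by (blast intro: red.r_op repl_Const)
qed

lemma repl_red_Check_fwd:
  assumes "repl_ty T T'" "repl_tm t t'" "repl_tm u u'" "red \<delta> (Check l T t u) a'"
  shows "\<exists>b'. red \<delta> (Check l T' t' u') b' \<and> repl_tm a' b'"
  using assms(4)
proof cases
  case r_check
  with assms(1-3) show ?thesis
    by (blast intro: red.r_check repl_Active repl_open(2) repl_tm_val_left)
qed

lemma repl_red_Check_bwd:
  assumes "repl_ty T T'" "repl_tm t t'" "repl_tm u u'" "is_val u" "red \<delta> (Check l T' t' u') b'"
  shows "\<exists>a'. red \<delta> (Check l T t u) a' \<and> repl_tm a' b'"
  using assms(5)
proof cases
  case r_check
  with assms(1-4) show ?thesis
    by (blast intro: red.r_check repl_Active repl_open(2))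
qed

lemma repl_red_Active_fwd:
  assumes "repl_tm c c'" "repl_tm v v'" "is_val v = is_val v'" "red \<delta> (Active l T t c v) a'"
  shows "\<exists>b'. red \<delta> (Active l T' t' c' v') b' \<and> repl_tm a' b'"
  using assms(4)
proof cases
  case r_ok
  with assms(1-3) show ?thesis
    by (blast dest: repl_tm_Const_left intro: red.r_ok)
next
  case r_fail
  with assms(1-3) show ?thesis
    by (blast dest: repl_tm_Const_left intro: red.r_fail repl_Blame)
qed

lemma repl_red_Active_bwd:
  assumes "repl_tm c c'" "repl_tm v v'" "is_val v = is_val v'" "is_val c"
    and "red \<delta> (Active l T' t' c' v') b'"
  shows "\<exists>a'. red \<delta> (Active l T t c v) a' \<and> repl_tm a' b'"
  using assms(5)
proof cases
  case r_ok
  then have "c = Const (CBool True)" "is_val v"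
    using assms(1,3,4) by (auto dest: repl_tm_Const_right)
  with r_ok assms(2) show ?thesis
    by (blast intro: red.r_ok)
next
  case r_fail
  then have "c = Const (CBool False)" "is_val v"
    using assms(1,3,4) by (auto dest: repl_tm_Const_right)
  with r_fail show ?thesis
    by (blast intro: red.r_fail repl_Blame)
qed

section \<open>Simulation\<close>

definition sim where
  "sim a b \<longleftrightarrow> repl_tm a b \<or> (\<exists>l. steps \<delta> a (Blame l) \<and> steps \<delta> b (Blame l))"

lemma sim_refl: "sim t t"
  unfolding sim_def using repl_refl(2) by blast

lemma repl_imp_sim: "repl_tm a b \<Longrightarrow> sim a b"
  unfolding sim_def by blast

lemma steps_red_repl_imp_sim:
  "steps \<delta> a a0 \<Longrightarrow> red \<delta> a0 a' \<Longrightarrow> repl_tm a' b' \<Longrightarrow> \<exists>a''. steps \<delta> a a'' \<and> sim a'' b'"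
  using repl_imp_sim red_step by (blast intro: rtranclp.rtrancl_into_rtrancl)

lemma steps_sim_prepend:
  "steps \<delta> a a0 \<Longrightarrow> \<exists>a'. steps \<delta> a0 a' \<and> sim a' b' \<Longrightarrow> \<exists>a'. steps \<delta> a a' \<and> sim a' b'"
  by (meson rtranclp_trans)

lemma red_repl_imp_steps_sim: "\<exists>b'. red \<delta> b b' \<and> repl_tm a' b' \<Longrightarrow> \<exists>b'. steps \<delta> b b' \<and> sim a' b'"
  unfolding sim_def by (blast intro: red_step)

lemma sim_Blame_right: "sim a (Blame l) \<Longrightarrow> steps \<delta> a (Blame l)"
  unfolding sim_def using step_e1 by (auto dest: repl_tm_Blame_right steps_from_Blame)

lemma sim_Blame_left: "sim (Blame l) b \<Longrightarrow> steps \<delta> b (Blame l)"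
  unfolding sim_def by (auto dest: repl_tm_Blame_left steps_from_Blame)

lemma sim_fill:
  assumes "sim x y" "ctx_ok Ea" "ctx_ok Eb"
    and "\<And>x y. repl_tm x y \<Longrightarrow> repl_tm (fill Ea x) (fill Eb y)"
  shows "sim (fill Ea x) (fill Eb y)"
  using assms unfolding sim_def by (blast intro: steps_fill_Blame)

lemma sim_fill_fwd:
  assumes "steps \<delta> y0 y" "sim x y" "ctx_ok Ea" "ctx_ok Eb"
    and "\<And>x y. repl_tm x y \<Longrightarrow> repl_tm (fill Ea x) (fill Eb y)"
  shows "\<exists>b. steps \<delta> (fill Eb y0) b \<and> sim (fill Ea x) b"
proof -
  obtain u where u: "steps \<delta> (fill Eb y0) u" "u = fill Eb y \<or> (\<exists>l. y = Blame l \<and> u = Blame l)"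
    using steps_fill[OF assms(1,4)] by blast
  have "sim (fill Ea x) u"
    using u(2)
  proof
    assume "\<exists>l. y = Blame l \<and> u = Blame l"
    then obtain l where "y = Blame l" "u = Blame l" by blast
    with assms(2) have "steps \<delta> x (Blame l)" by (simp add: sim_Blame_right)
    then have "steps \<delta> (fill Ea x) (Blame l)" using assms(3) by (rule steps_fill_Blame)
    with \<open>u = Blame l\<close> show ?thesis unfolding sim_def by blast
  qed (use assms sim_fill in blast)
  with u(1) show ?thesis by blast
qed

lemma sim_fill_bwd:
  assumes "steps \<delta> x0 x" "sim x y" "ctx_ok Ea" "ctx_ok Eb"
    and "\<And>x y. repl_tm x y \<Longrightarrow> repl_tm (fill Ea x) (fill Eb y)"
  shows "\<exists>a. steps \<delta> (fill Ea x0) a \<and> sim a (fill Eb y)"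
proof -
  obtain u where u: "steps \<delta> (fill Ea x0) u" "u = fill Ea x \<or> (\<exists>l. x = Blame l \<and> u = Blame l)"
    using steps_fill[OF assms(1,3)] by blast
  have "sim u (fill Eb y)"
    using u(2)
  proof
    assume "\<exists>l. x = Blame l \<and> u = Blame l"
    then obtain l where "x = Blame l" "u = Blame l" by blast
    with assms(2) have "steps \<delta> y (Blame l)" by (simp add: sim_Blame_left)
    then have "steps \<delta> (fill Eb y) (Blame l)" using assms(4) by (rule steps_fill_Blame)
    with \<open>u = Blame l\<close> show ?thesis unfolding sim_def by blast
  qed (use assms sim_fill in blast)
  with u(1) show ?thesis by blast
qed

lemma repl_val_right_evaluates:
  assumes "repl_tm a b" "is_val b"
  shows "\<exists>a0. (ctx_red \<delta>)\<^sup>*\<^sup>* a a0 \<and> is_val a0 \<and> repl_tm a0 b"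
  using repl_tm_val_right[OF assms]
proof
  assume "is_val a"
  with assms(1) show ?thesis by blast
next
  assume "a = e1 \<and> b = e2"
  moreover have "ctx_red \<delta> e1 e2"
    using step_e1 assms(2) \<open>a = e1 \<and> b = e2\<close> by (auto simp: step_iff)
  ultimately show ?thesis
    using assms(2) repl_refl(2) by blast
qed

lemma list_repl_vals_right_evaluate:
  "list_all2 repl_tm vs ws \<Longrightarrow> \<forall>w\<in>set ws. is_val w \<Longrightarrow>
   \<exists>vs0. list_all2 repl_tm vs0 ws \<and> (\<forall>v\<in>set vs0. is_val v) \<and>
     (\<forall>pre es p. (\<forall>v\<in>set pre. is_val v) \<longrightarrow> steps \<delta> (Op p (pre @ vs @ es)) (Op p (pre @ vs0 @ es)))"
proof (induct rule: list_all2_induct)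
  case (Cons a vs b ws)
  obtain a0 where a0: "(ctx_red \<delta>)\<^sup>*\<^sup>* a a0" "is_val a0" "repl_tm a0 b"
    using repl_val_right_evaluates[OF Cons.hyps(1)] Cons.prems by auto
  obtain vs0 where vs0: "list_all2 repl_tm vs0 ws" "\<forall>v\<in>set vs0. is_val v"
    "\<forall>pre es p. (\<forall>v\<in>set pre. is_val v) \<longrightarrow> steps \<delta> (Op p (pre @ vs @ es)) (Op p (pre @ vs0 @ es))"
    using Cons.hyps(3) Cons.prems by auto
  have "steps \<delta> (Op p (pre @ a # vs @ es)) (Op p (pre @ a0 # vs0 @ es))"
    if pre: "\<forall>v\<in>set pre. is_val v" for pre es p
  proof -
    have "steps \<delta> (Op p (pre @ a # vs @ es)) (Op p (pre @ a0 # vs @ es))"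
      using ctx_red_steps_fill[OF a0(1), of "COp p pre Hole (vs @ es)"] pre by simp
    also have "steps \<delta> \<dots> (Op p (pre @ a0 # vs0 @ es))"
      using vs0(3)[rule_format, of "pre @ [a0]"] pre a0(2) by auto
    finally show ?thesis .
  qed
  with a0 vs0 show ?case
    by (intro exI[of _ "a0 # vs0"]) auto
qed simp

lemma list_repl_vals_left: "list_all2 repl_tm vs ws \<Longrightarrow> \<forall>v\<in>set vs. is_val v \<Longrightarrow> \<forall>w\<in>set ws. is_val w"
  by (induct rule: list_all2_induct) (auto dest: repl_tm_val_left)

lemma repl_ctx_blame_fwd: "repl_tm t t' \<Longrightarrow> ctx_blame t l \<Longrightarrow> ctx_blame t' l"
proof (induct rule: repl_ty_repl_tm.inducts(2)[where ?P1.0 = "\<lambda>_ _. True"])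
  case repl_e1
  then have "step \<delta> e1 (Blame l)"
    by (auto simp: step_iff)
  with step_e1 step_det show ?case
    by (metis ctx_blame_Blame)
next
  case (repl_Op ts ts' p)
  from repl_Op.prems obtain vs t es where ts: "ts = vs @ t # es" "\<forall>v\<in>set vs. is_val v" "ctx_blame t l"
    by cases auto
  with repl_Op.hyps obtain ws u rest where "ts' = ws @ u # rest" "list_all2 repl_tm vs ws"
    "ctx_blame u l"
    by (auto simp: list_all2_append1 list_all2_Cons1 dest: list_all2_conjD1)
  with ts show ?case
    by (auto intro: ctx_blame_Op dest: list_repl_vals_left)
next
  case (repl_App t t' u u')
  from repl_App.prems show ?case
    by cases (use repl_App.hyps in \<open>blast intro: ctx_blame_AppL ctx_blame_AppR repl_tm_val_left\<close>)+
next
  case (repl_TApp t t' T T')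
  from repl_TApp.prems show ?case
    by cases (use repl_TApp.hyps in \<open>blast intro: ctx_blame_TApp\<close>)
next
  case (repl_Check T T' t t' u u' l')
  from repl_Check.prems show ?case
    by cases (use repl_Check.hyps in \<open>blast intro: ctx_blame_Check\<close>)
next
  case (repl_Active T T' t t' u u' v v' l')
  from repl_Active.prems show ?case
    by cases (use repl_Active.hyps in \<open>auto intro: ctx_blame_Active\<close>)
qed (auto elim: ctx_blame.cases)

lemma repl_ctx_blame_bwd: "repl_tm t t' \<Longrightarrow> ctx_blame t' l \<Longrightarrow> steps \<delta> t (Blame l)"
proof (induct rule: repl_ty_repl_tm.inducts(2)[where ?P1.0 = "\<lambda>_ _. True"])
  case repl_e1
  then have "steps \<delta> e2 (Blame l)" by (rule ctx_blame_steps)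
  with step_e1 show ?case by (rule converse_rtranclp_into_rtranclp)
next
  case (repl_Op ts ts' p)
  from repl_Op.prems obtain ws u rest where ts': "ts' = ws @ u # rest" "\<forall>w\<in>set ws. is_val w"
      "ctx_blame u l"
    by cases auto
  with repl_Op.hyps obtain vs t es where ts: "ts = vs @ t # es" "list_all2 repl_tm vs ws"
    "steps \<delta> t (Blame l)"
    by (auto simp: list_all2_append2 list_all2_Cons2 dest: list_all2_conjD1)
  then obtain vs0 where vs0: "\<forall>v\<in>set vs0. is_val v"
    "\<forall>pre es p. (\<forall>v\<in>set pre. is_val v) \<longrightarrow> steps \<delta> (Op p (pre @ vs @ es)) (Op p (pre @ vs0 @ es))"
    using list_repl_vals_right_evaluate[OF ts(2) ts'(2)] by blast
  have "steps \<delta> (Op p ts) (Op p (vs0 @ t # es))"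
    using vs0(2)[rule_format, of "[]"] ts(1) by simp
  also have "steps \<delta> (Op p (vs0 @ t # es)) (Blame l)"
    using steps_fill_Blame[OF ts(3), of "COp p vs0 Hole es"] vs0(1) by simp
  finally show ?case .
next
  case (repl_App t t' u u')
  from repl_App.prems show ?case
  proof cases
    case ctx_blame_AppL
    with repl_App.hyps show ?thesis
      using steps_fill_Blame[of \<delta> t l "CAppL Hole u"] by simp
  next
    case ctx_blame_AppR
    then obtain t0 where t0: "(ctx_red \<delta>)\<^sup>*\<^sup>* t t0" "is_val t0"
      using repl_val_right_evaluates repl_App.hyps(1) by blast
    have "steps \<delta> (App t u) (App t0 u)"
      using ctx_red_steps_fill[OF t0(1), of "CAppL Hole u"] by simp
    also have "steps \<delta> (App t0 u) (Blame l)"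
      using steps_fill_Blame[of \<delta> u l "CAppR t0 Hole"] repl_App.hyps(4) ctx_blame_AppR t0(2) by simp
    finally show ?thesis .
  qed
next
  case (repl_TApp t t' T T')
  from repl_TApp.prems have "ctx_blame t' l" by cases
  with repl_TApp.hyps show ?case
    using steps_fill_Blame[of \<delta> t l "CTApp Hole T"] by simp
next
  case (repl_Check T T' t t' u u' l')
  from repl_Check.prems have "ctx_blame u' l" by cases
  with repl_Check.hyps show ?case
    using steps_fill_Blame[of \<delta> u l "CCheck l' T t Hole"] by simp
next
  case (repl_Active T T' t t' u u' v v' l')
  from repl_Active.prems have "ctx_blame u' l" "is_val v'" by (cases, simp)+
  with repl_Active.hyps show ?case
    using steps_fill_Blame[of \<delta> u l "CActive l' T t Hole v"] by simp
qed (auto elim: ctx_blame.cases)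

lemma repl_ctx_red_fwd: "repl_tm t t' \<Longrightarrow> ctx_red \<delta> t a' \<Longrightarrow> \<exists>b'. steps \<delta> t' b' \<and> sim a' b'"
proof (induct arbitrary: a' rule: repl_ty_repl_tm.inducts(2)[where ?P1.0 = "\<lambda>_ _. True"])
  case repl_e1
  then have "a' = e2"
    using step_e1 step_det ctx_red_step by blast
  then show ?case
    using sim_refl by blast
next
  case (repl_Op ts ts' p)
  from repl_Op.prems show ?case
  proof cases
    case ctx_red_red
    then show ?thesis
      using red_repl_imp_steps_sim repl_red_Op_fwd[OF list_all2_conjD1[OF repl_Op.hyps]] by blast
  next
    case (ctx_red_Op vs t t'' es)
    obtain ws u rest where ts': "ts' = ws @ u # rest" "list_all2 repl_tm vs ws" "list_all2 repl_tm es rest"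
      and IH: "\<forall>a'. ctx_red \<delta> t a' \<longrightarrow> (\<exists>b'. steps \<delta> u b' \<and> sim a' b')"
      using list_all2_append_Cons1[OF repl_Op.hyps[unfolded ctx_red_Op(1)]]
      by (elim exE conjE, intro that) (auto dest: list_all2_conjD1)
    with ctx_red_Op obtain u' where "steps \<delta> u u'" "sim t'' u'" by blast
    moreover have "\<forall>w\<in>set ws. is_val w"
      using list_repl_vals_left ts'(2) ctx_red_Op(3) by blast
    ultimately show ?thesis
      using sim_fill_fwd[of u u' t'' "COp p vs Hole es" "COp p ws Hole rest"] ctx_red_Op ts'
      by (simp add: repl_ty_repl_tm.repl_Op list_all2_appendI)
  qed
next
  case (repl_App t t' u u')
  from repl_App.prems show ?case
  proof cases
    case ctx_red_red
    then show ?thesis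
      using red_repl_imp_steps_sim repl_red_App_fwd[OF repl_App.hyps(1,3)] by blast
  next
    case (ctx_red_AppL t1)
    with repl_App.hyps obtain t1' where "steps \<delta> t' t1'" "sim t1 t1'" by blast
    then show ?thesis
      using sim_fill_fwd[of t' t1' t1 "CAppL Hole u" "CAppL Hole u'"] ctx_red_AppL repl_App.hyps(3)
      by (simp add: repl_ty_repl_tm.repl_App)
  next
    case (ctx_red_AppR u1)
    with repl_App.hyps obtain u1' where "steps \<delta> u' u1'" "sim u1 u1'" by blast
    moreover have "is_val t'"
      using repl_App.hyps(1) \<open>is_val t\<close> by (rule repl_tm_val_left)
    ultimately show ?thesis
      using sim_fill_fwd[of u' u1' u1 "CAppR t Hole" "CAppR t' Hole"] ctx_red_AppR repl_App.hyps(1)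
      by (simp add: repl_ty_repl_tm.repl_App)
  qed
next
  case (repl_TApp t t' T T')
  from repl_TApp.prems show ?case
  proof cases
    case ctx_red_red
    then show ?thesis
      using red_repl_imp_steps_sim repl_red_TApp_fwd[OF repl_TApp.hyps(1,3)] by blast
  next
    case (ctx_red_TApp t1)
    with repl_TApp.hyps obtain t1' where "steps \<delta> t' t1'" "sim t1 t1'" by blast
    then show ?thesis
      using sim_fill_fwd[of t' t1' t1 "CTApp Hole T" "CTApp Hole T'"] ctx_red_TApp repl_TApp.hyps(3)
      by (simp add: repl_ty_repl_tm.repl_TApp)
  qed
next
  case (repl_Check T T' t t' u u' l)
  from repl_Check.prems show ?case
  proof cases
    case ctx_red_red
    then show ?thesis
      using red_repl_imp_steps_sim repl_red_Check_fwd[OF repl_Check.hyps(1,3,5)] by blast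
  next
    case (ctx_red_Check u1)
    with repl_Check.hyps obtain u1' where "steps \<delta> u' u1'" "sim u1 u1'" by blast
    then show ?thesis
      using sim_fill_fwd[of u' u1' u1 "CCheck l T t Hole" "CCheck l T' t' Hole"] ctx_red_Check
        repl_Check.hyps(1,3) by (simp add: repl_ty_repl_tm.repl_Check)
  qed
next
  case (repl_Active T T' t t' u u' v v' l)
  from repl_Active.prems show ?case
  proof cases
    case ctx_red_red
    then show ?thesis
      using red_repl_imp_steps_sim repl_red_Active_fwd[OF repl_Active.hyps(5,7,9)] by blast
  next
    case (ctx_red_Active u1)
    with repl_Active.hyps obtain u1' where "steps \<delta> u' u1'" "sim u1 u1'" by blast
    then show ?thesis
      using sim_fill_fwd[of u' u1' u1 "CActive l T t Hole v" "CActive l T' t' Hole v'"] ctx_red_Active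
        repl_Active.hyps(1,3,7,9) by (simp add: repl_ty_repl_tm.repl_Active)
  qed
qed (auto dest: ctx_red_not_val ctx_red_step simp: BVar_no_step FVar_no_step Blame_no_step)

lemma repl_ctx_red_bwd: "repl_tm t t' \<Longrightarrow> ctx_red \<delta> t' b' \<Longrightarrow> \<exists>a'. steps \<delta> t a' \<and> sim a' b'"
proof (induct arbitrary: b' rule: repl_ty_repl_tm.inducts(2)[where ?P1.0 = "\<lambda>_ _. True"])
  case repl_e1
  with step_e1 have "steps \<delta> e1 b'"
    by (blast intro: ctx_red_step converse_rtranclp_into_rtranclp)
  then show ?case
    using sim_refl by blast
next
  case (repl_Op ts ts' p)
  have L: "list_all2 repl_tm ts ts'"
    using repl_Op.hyps by (rule list_all2_conjD1)
  from repl_Op.prems show ?case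
  proof cases
    case ctx_red_red
    then have "\<forall>w\<in>set ts'. is_val w"
      by cases auto
    then obtain ts0 where ts0: "list_all2 repl_tm ts0 ts'" "\<forall>v\<in>set ts0. is_val v"
      "\<forall>pre es q. (\<forall>v\<in>set pre. is_val v) \<longrightarrow> steps \<delta> (Op q (pre @ ts @ es)) (Op q (pre @ ts0 @ es))"
      using list_repl_vals_right_evaluate[OF L] by blast
    moreover have "steps \<delta> (Op p ts) (Op p ts0)"
      using ts0(3)[rule_format, where pre = "[]" and es = "[]" and q = p] by simp
    moreover obtain a' where "red \<delta> (Op p ts0) a'" "repl_tm a' b'"
      using repl_red_Op_bwd ts0(1,2) ctx_red_red by blast
    ultimately show ?thesis
      by (blast intro: steps_red_repl_imp_sim)
  next
    case (ctx_red_Op ws u u' rest)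
    obtain vs t es where ts: "ts = vs @ t # es" "list_all2 repl_tm vs ws" "list_all2 repl_tm es rest"
      and IH: "\<forall>b'. ctx_red \<delta> u b' \<longrightarrow> (\<exists>a'. steps \<delta> t a' \<and> sim a' b')"
      using list_all2_append_Cons2[OF repl_Op.hyps[unfolded ctx_red_Op(1)]]
      by (elim exE conjE, intro that) (auto dest: list_all2_conjD1)
    obtain vs0 where vs0: "list_all2 repl_tm vs0 ws" "\<forall>v\<in>set vs0. is_val v"
      "\<forall>pre es q. (\<forall>v\<in>set pre. is_val v) \<longrightarrow> steps \<delta> (Op q (pre @ vs @ es)) (Op q (pre @ vs0 @ es))"
      using list_repl_vals_right_evaluate[OF ts(2)] ctx_red_Op(3) by blast
    have "steps \<delta> (Op p ts) (Op p (vs0 @ t # es))"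
      using vs0(3)[rule_format, where pre = "[]" and es = "t # es" and q = p] ts(1) by simp
    from IH ctx_red_Op obtain t1 where "steps \<delta> t t1" "sim t1 u'" by blast
    then have "\<exists>a'. steps \<delta> (Op p (vs0 @ t # es)) a' \<and> sim a' (Op p (ws @ u' # rest))"
      using sim_fill_bwd[of t t1 u' "COp p vs0 Hole es" "COp p ws Hole rest"] vs0 ts(3) ctx_red_Op(3)
      by (simp add: repl_ty_repl_tm.repl_Op list_all2_appendI)
    with \<open>steps \<delta> (Op p ts) (Op p (vs0 @ t # es))\<close> ctx_red_Op(2) show ?thesis
      by (blast intro: steps_sim_prepend)
  qed
next
  case (repl_App t t' u u')
  from repl_App.prems show ?case
  proof cases
    case ctx_red_red
    then have "is_val t'" "is_val u'"
      by (auto dest: red_operands_are_vals)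
    then obtain t0 u0 where "(ctx_red \<delta>)\<^sup>*\<^sup>* t t0" "is_val t0" "repl_tm t0 t'"
      "(ctx_red \<delta>)\<^sup>*\<^sup>* u u0" "is_val u0" "repl_tm u0 u'"
      using repl_val_right_evaluates repl_App.hyps(1,3) by meson
    moreover from this have "steps \<delta> (App t u) (App t0 u0)"
      using ctx_red_steps_fill[of \<delta> t t0 "CAppL Hole u"] ctx_red_steps_fill[of \<delta> u u0 "CAppR t0 Hole"]
      by (simp add: rtranclp_trans)
    moreover note repl_red_App_bwd ctx_red_red
    ultimately show ?thesis
      by (blast intro: steps_red_repl_imp_sim)
  next
    case (ctx_red_AppL t1')
    with repl_App.hyps obtain t1 where "steps \<delta> t t1" "sim t1 t1'" by blast
    then show ?thesis
      using sim_fill_bwd[of t t1 t1' "CAppL Hole u" "CAppL Hole u'"] ctx_red_AppL repl_App.hyps(3)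
      by (simp add: repl_ty_repl_tm.repl_App)
  next
    case (ctx_red_AppR u1')
    obtain t0 where t0: "(ctx_red \<delta>)\<^sup>*\<^sup>* t t0" "is_val t0" "repl_tm t0 t'"
      using repl_val_right_evaluates repl_App.hyps(1) ctx_red_AppR(2) by blast
    from repl_App.hyps ctx_red_AppR obtain u1 where "steps \<delta> u u1" "sim u1 u1'" by blast
    then have "\<exists>a'. steps \<delta> (App t0 u) a' \<and> sim a' (App t' u1')"
      using sim_fill_bwd[of u u1 u1' "CAppR t0 Hole" "CAppR t' Hole"] t0 ctx_red_AppR(2)
      by (simp add: repl_ty_repl_tm.repl_App)
    moreover have "steps \<delta> (App t u) (App t0 u)"
      using ctx_red_steps_fill[OF t0(1), of "CAppL Hole u"] by simp
    ultimately show ?thesis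
      using ctx_red_AppR(1) by (blast intro: steps_sim_prepend)
  qed
next
  case (repl_TApp t t' T T')
  from repl_TApp.prems show ?case
  proof cases
    case ctx_red_red
    then obtain t0 where t0: "(ctx_red \<delta>)\<^sup>*\<^sup>* t t0" "is_val t0" "repl_tm t0 t'"
      using repl_val_right_evaluates repl_TApp.hyps(1) by (blast dest: red_operands_are_vals)
    then have "steps \<delta> (TApp t T) (TApp t0 T)"
      using ctx_red_steps_fill[OF t0(1), of "CTApp Hole T"] by simp
    with t0 show ?thesis
      using repl_red_TApp_bwd repl_TApp.hyps(3) ctx_red_red
      by (blast intro: steps_red_repl_imp_sim)
  next
    case (ctx_red_TApp t1')
    with repl_TApp.hyps obtain t1 where "steps \<delta> t t1" "sim t1 t1'" by blast
    then show ?thesis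
      using sim_fill_bwd[of t t1 t1' "CTApp Hole T" "CTApp Hole T'"] ctx_red_TApp repl_TApp.hyps(3)
      by (simp add: repl_ty_repl_tm.repl_TApp)
  qed
next
  case (repl_Check T T' t t' u u' l)
  from repl_Check.prems show ?case
  proof cases
    case ctx_red_red
    then obtain u0 where u0: "(ctx_red \<delta>)\<^sup>*\<^sup>* u u0" "is_val u0" "repl_tm u0 u'"
      using repl_val_right_evaluates repl_Check.hyps(5) by (blast dest: red_operands_are_vals)
    then have "steps \<delta> (Check l T t u) (Check l T t u0)"
      using ctx_red_steps_fill[OF u0(1), of "CCheck l T t Hole"] by simp
    with u0 show ?thesis
      using repl_red_Check_bwd repl_Check.hyps(1,3) ctx_red_red
      by (blast intro: steps_red_repl_imp_sim)
  next
    case (ctx_red_Check u1')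
    with repl_Check.hyps obtain u1 where "steps \<delta> u u1" "sim u1 u1'" by blast
    then show ?thesis
      using sim_fill_bwd[of u u1 u1' "CCheck l T t Hole" "CCheck l T' t' Hole"] ctx_red_Check
        repl_Check.hyps(1,3) by (simp add: repl_ty_repl_tm.repl_Check)
  qed
next
  case (repl_Active T T' t t' u u' v v' l)
  from repl_Active.prems show ?case
  proof cases
    case ctx_red_red
    then have "is_val u'" "is_val v"
      using repl_Active.hyps(9) by (auto dest: red_operands_are_vals)
    then obtain u0 where u0: "(ctx_red \<delta>)\<^sup>*\<^sup>* u u0" "is_val u0" "repl_tm u0 u'"
      using repl_val_right_evaluates repl_Active.hyps(5) by blast
    then have "steps \<delta> (Active l T t u v) (Active l T t u0 v)"
      using ctx_red_steps_fill[OF u0(1), of "CActive l T t Hole v"] \<open>is_val v\<close> by simp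
    with u0 show ?thesis
      using repl_red_Active_bwd repl_Active.hyps(7,9) ctx_red_red
      by (blast intro: steps_red_repl_imp_sim)
  next
    case (ctx_red_Active u1')
    with repl_Active.hyps obtain u1 where "steps \<delta> u u1" "sim u1 u1'" by blast
    then show ?thesis
      using sim_fill_bwd[of u u1 u1' "CActive l T t Hole v" "CActive l T' t' Hole v'"] ctx_red_Active
        repl_Active.hyps(1,3,7,9) by (simp add: repl_ty_repl_tm.repl_Active)
  qed
qed (auto dest: ctx_red_not_val ctx_red_step simp: BVar_no_step FVar_no_step Blame_no_step)

lemma sim_step_fwd:
  assumes "sim a b" "step \<delta> a a'"
  shows "\<exists>b'. steps \<delta> b b' \<and> sim a' b'"
  using assms(1)[unfolded sim_def]
proof (elim disjE exE conjE)
  assume "repl_tm a b"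
  from assms(2)[unfolded step_iff] show ?thesis
  proof (elim disjE exE conjE)
    assume "ctx_red \<delta> a a'"
    with \<open>repl_tm a b\<close> show ?thesis by (rule repl_ctx_red_fwd)
  next
    fix l assume "ctx_blame a l" "a \<noteq> Blame l" "a' = Blame l"
    with \<open>repl_tm a b\<close> have "steps \<delta> b (Blame l)"
      by (blast intro: repl_ctx_blame_fwd ctx_blame_steps)
    with \<open>a' = Blame l\<close> sim_refl show ?thesis by blast
  qed
next
  fix l assume "steps \<delta> a (Blame l)" "steps \<delta> b (Blame l)"
  moreover from assms(2) this(1) have "steps \<delta> a' (Blame l)"
    by (rule step_preserves_steps_Blame)
  ultimately have "sim a' b"
    unfolding sim_def by blast
  then show ?thesis by blast
qed

lemma sim_step_bwd:
  assumes "sim a b" "step \<delta> b b'"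
  shows "\<exists>a'. steps \<delta> a a' \<and> sim a' b'"
  using assms(1)[unfolded sim_def]
proof (elim disjE exE conjE)
  assume "repl_tm a b"
  from assms(2)[unfolded step_iff] show ?thesis
  proof (elim disjE exE conjE)
    assume "ctx_red \<delta> b b'"
    with \<open>repl_tm a b\<close> show ?thesis by (rule repl_ctx_red_bwd)
  next
    fix l assume "ctx_blame b l" "b \<noteq> Blame l" "b' = Blame l"
    with \<open>repl_tm a b\<close> have "steps \<delta> a (Blame l)"
      by (blast intro: repl_ctx_blame_bwd)
    with \<open>b' = Blame l\<close> sim_refl show ?thesis by blast
  qed
next
  fix l assume "steps \<delta> a (Blame l)" "steps \<delta> b (Blame l)"
  moreover from assms(2) this(2) have "steps \<delta> b' (Blame l)"
    by (rule step_preserves_steps_Blame)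
  ultimately have "sim a b'"
    unfolding sim_def by blast
  then show ?thesis by blast
qed

lemma sim_val_left:
  assumes "sim v b" "is_val v"
  shows "\<exists>b'. steps \<delta> b b' \<and> is_val b' \<and> (v = Const (CBool True) \<longrightarrow> b' = Const (CBool True))"
  using assms(1)[unfolded sim_def]
proof (elim disjE exE conjE)
  assume "repl_tm v b"
  with assms(2) have "is_val b \<and> (v = Const (CBool True) \<longrightarrow> b = Const (CBool True))"
    by (auto dest: repl_tm_val_left repl_tm_Const_left)
  then show ?thesis by blast
next
  fix l assume "steps \<delta> v (Blame l)"
  with assms(2) show ?thesis by (auto dest: steps_from_val)
qed

lemma sim_val_right:
  assumes "sim a v" "is_val v"
  shows "\<exists>a'. steps \<delta> a a' \<and> is_val a' \<and> (v = Const (CBool True) \<longrightarrow> a' = Const (CBool True))"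
  using assms(1)[unfolded sim_def]
proof (elim disjE exE conjE)
  assume "repl_tm a v"
  with assms(2) consider "is_val a" | "a = e1" "v = e2"
    using repl_tm_val_right by blast
  then show ?thesis
  proof cases
    case 1
    with \<open>repl_tm a v\<close> have "v = Const (CBool True) \<longrightarrow> a = Const (CBool True)"
      by (auto dest: repl_tm_Const_right)
    with 1 show ?thesis by blast
  next
    case 2
    with step_e1 assms(2) show ?thesis by blast
  qed
next
  fix l assume "steps \<delta> v (Blame l)"
  with assms(2) show ?thesis by (auto dest: steps_from_val)
qed

end

theorem mainTheorem5:
  fixes \<delta> :: "'p \<Rightarrow> 'k const list \<Rightarrow> 'k const option"
    and e e1 e2 :: "('b,'k,'p,'l) tm" and x :: nat
  assumes "is_term e" and "is_term e1" and "is_term e2"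
    and "step \<delta> e1 e2"
  shows "(\<forall>v1. steps \<delta> (subst_tm x e1 e) v1 \<and> is_val v1 \<longrightarrow>
            (\<exists>v2. steps \<delta> (subst_tm x e2 e) v2 \<and> is_val v2 \<and>
                  (v1 = Const (CBool True) \<longrightarrow> v2 = Const (CBool True))))
       \<and> (\<forall>v2. steps \<delta> (subst_tm x e2 e) v2 \<and> is_val v2 \<longrightarrow>
            (\<exists>v1. steps \<delta> (subst_tm x e1 e) v1 \<and> is_val v1 \<and>
                  (v2 = Const (CBool True) \<longrightarrow> v1 = Const (CBool True))))"
proof -
  interpret replace_step \<delta> e1 e2
    using assms(2-4) by unfold_locales (simp_all add: is_term_def)
  have related: "sim (subst_tm x e1 e) (subst_tm x e2 e)"
    using assms(1) repl_subst(2) repl_imp_sim by (simp add: is_term_def)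
  let ?P = "\<lambda>v w. is_val w \<and> (v = Const (CBool True) \<longrightarrow> w = Const (CBool True))"
  have "\<exists>v2. steps \<delta> (subst_tm x e2 e) v2 \<and> ?P v1 v2"
    if "steps \<delta> (subst_tm x e1 e) v1" "is_val v1" for v1
    using sim_step_fwd sim_val_left that related
    by (rule rtranclp_simulation_final[where S = sim and Q = is_val and P = ?P])
  moreover have "\<exists>v1. steps \<delta> (subst_tm x e1 e) v1 \<and> ?P v2 v1"
    if "steps \<delta> (subst_tm x e2 e) v2" "is_val v2" for v2
    using sim_step_bwd sim_val_right that related
    by (rule rtranclp_simulation_final[where S = "\<lambda>b a. sim a b" and Q = is_val and P = ?P])
  ultimately show ?thesis
    by blast
qed

end
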